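(* Let $t\in\Lambda^\circ$ and let $\alpha:\mathcal T(F)\to\bigoplus_{v\in M_F^0}N$ be the homomorphism $x\mapsto(\log_{\mathcal T,v}(x))_{v\in M_F^0}$. Then there is a polynomial $P$ such that for every $B>0$ the image $\alpha(\{x\in\mathcal T(F)\mid H(t,x)\le B\})$ is a finite set of cardinality at most $P(B)$.
   Context: Let $F$ be a number field, $M_F^0$ and $M_F^\infty$ its sets of finite and infinite places. For $v\in M_F^0$ let $\operatorname{ord}_v$ be the normalized valuation of $F_v$ and $q_v$ the cardinality of its residue field; for $v\in M_F^\infty$ put $q_v:=e^{[F_v:\mathbb R]}$. A simplicial stacky fan $(\Sigma,N,\beta)$ consists of a finitely generated abelian group $N$ of rank $d$, a complete simplicial rational fan $\Sigma$ in $N_{\mathbb Q}$, and a homomorphism $\beta:\mathbb Z^{\Sigma(1)}\to N$ with finite cokernel such that for each ray $\rho\in\Sigma(1)$ the image of $\beta(e_\rho)$ in $N_{\mathbb Q}$ is a nonzero vector on $\rho$. Fix $N=N^{\mathrm{rig}}\oplus N_{\mathrm{tor}}$ with $N^{\mathrm{rig}}=\mathbb Z^d$ and $N_{\mathrm{tor}}\cong G^D:=\bigoplus_{i=1}^{\ell}\mathbb Z/n_i\mathbb Z$; let $b_\rho\in N^{\mathrm{rig}}$ be the $N^{\mathrm{rig}}$-component of $\beta(e_\rho)$. Let $\mathcal T=\mathbb G_m^d\times B(\prod_i\mu_{n_i})$ be the open stacky torus of the associated toric stack; for a field $K\supset F$, $\mathcal T(K)=(K^\times)^d\times\prod_i K^\times/(K^\times)^{n_i}$.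 For $y\in N^{\mathrm{rig}}_{\mathbb R}$ choose a cone $\sigma\ni y$ and write uniquely $y=\sum_{\rho\in\sigma(1)}a_\rho(y)b_\rho$ with $a_\rho(y)\ge0$; set $a_\rho(y)=0$ for $\rho\notin\sigma(1)$. For $n=(y,g)\in N$ put $a_\rho(n):=a_\rho(y)$ and $q(n):=(\sum_\rho\{a_\rho(y)\}b_\rho,\,g)$. Let $\pi_0^*:=q(N)\setminus\{(0,0)\}$ and $I:=\Sigma(1)\sqcup\pi_0^*$. Linear forms on $\mathbb R^I$: $\Xi_\rho(t)=t_\rho$ ($\rho\in\Sigma(1)$), $\Xi_{\mathcal Y}(t)=t_{\mathcal Y}+\sum_{\rho}a_\rho(\mathcal Y)t_\rho$ ($\mathcal Y\in\pi_0^*$); $\Lambda^\circ:=\{t\in\mathbb R^I\mid\Xi_i(t)>0\ \forall i\in I\}$. For $s\in\mathbb R^I$: $\varphi_s(n)=s_{q(n)}+\sum_\rho a_\rho(n)s_\rho$ if $q(n)\ne(0,0)$, $\varphi_s(n)=\sum_\rho a_\rho(n)s_\rho$ otherwise; $\varphi^\infty_s$ is the function on $N^{\mathrm{rig}}_{\mathbb R}$ linear on each cone with $\varphi^\infty_s(b_\rho)=s_\rho$. $\log_{\mathcal T,v}(x)=((\operatorname{ord}_v t_j)_j,(\operatorname{ord}_vu_i\bmod n_i)_i)\in N$ for $v$ finite and $x=((t_j),([u_i]))$; $\log_{\mathcal T,v}(x)=(-\log|t_j|)_j\in\mathbb R^d$ for $v$ infinite. $H_v(s,x)=q_v^{\varphi_s(\log_{\mathcal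 T,v}x)}$ ($v$ finite), $H_v(s,x)=\exp([F_v:\mathbb R]\varphi^\infty_s(\log_{\mathcal T,v}x))$ ($v$ infinite), $H(s,x)=\prod_vH_v(s,x)$. *)

theory Defs
  imports Complex_Main "HOL-Computational_Algebra.Polynomial"
begin

definition number_field :: "complex set \<Rightarrow> bool" where
  "number_field F \<longleftrightarrow> 0 \<in> F \<and> 1 \<in> F \<and>
     (\<forall>x\<in>F. \<forall>y\<in>F. x + y \<in> F \<and> x * y \<in> F) \<and>
     (\<forall>x\<in>F. - x \<in> F \<and> inverse x \<in> F) \<and>
     (\<exists>B. finite B \<and> B \<subseteq> F \<and>
        (\<forall>x\<in>F. \<exists>c. (\<forall>b\<in>B. c b \<in> \<rat>) \<and> x = (\<Sum>b\<in>B. c b * b)))"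

definition algebraic_integer :: "complex \<Rightarrow> bool" where
  "algebraic_integer x \<longleftrightarrow> (\<exists>p :: int poly. lead_coeff p = 1 \<and> poly (map_poly of_int p) x = 0)"

definition ring_of_integers :: "complex set \<Rightarrow> complex set" where
  "ring_of_integers F = {x \<in> F. algebraic_integer x}"

definition is_ideal :: "complex set \<Rightarrow> complex set \<Rightarrow> bool" where
  "is_ideal R P \<longleftrightarrow> P \<subseteq> R \<and> 0 \<in> P \<and> (\<forall>a\<in>P. \<forall>b\<in>P. a + b \<in> P) \<and> (\<forall>a\<in>P. - a \<in> P)
     \<and> (\<forall>r\<in>R. \<forall>a\<in>P. r * a \<in> P)"

definition is_prime_ideal :: "complex set \<Rightarrow> complex set \<Rightarrow> bool" where
  "is_prime_ideal R P \<longleftrightarrow> is_ideal R P \<and> P \<noteq> R \<and>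
     (\<forall>a\<in>R. \<forall>b\<in>R. a * b \<in> P \<longrightarrow> a \<in> P \<or> b \<in> P)"

definition finite_places :: "complex set \<Rightarrow> complex set set" where
  "finite_places F = {P. is_prime_ideal (ring_of_integers F) P \<and> P \<noteq> {0}}"

fun ideal_pow :: "complex set \<Rightarrow> complex set \<Rightarrow> nat \<Rightarrow> complex set" where
  "ideal_pow R P 0 = R"
| "ideal_pow R P (Suc k) =
     {sum_list (map (\<lambda>(a, b). a * b) l) | l. set l \<subseteq> P \<times> ideal_pow R P k}"

definition ord_int :: "complex set \<Rightarrow> complex set \<Rightarrow> complex \<Rightarrow> nat" where
  "ord_int F P a = (GREATEST k. a \<in> ideal_pow (ring_of_integers F) P k)"

definition ord_v :: "complex set \<Rightarrow> complex set \<Rightarrow> complex \<Rightarrow> int" where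
  "ord_v F P x = (SOME k. \<exists>a\<in>ring_of_integers F - {0}. \<exists>b\<in>ring_of_integers F - {0}.
       x = a / b \<and> k = int (ord_int F P a) - int (ord_int F P b))"

definition q_fin :: "complex set \<Rightarrow> complex set \<Rightarrow> nat" where
  "q_fin F P = card ((\<lambda>a. (\<lambda>p. a + p) ` P) ` ring_of_integers F)"

text \<open>Field embeddings F \<rightarrow> \<complex> (normalized to 0 outside F); infinite places are
  classes {\<sigma>, conj \<circ> \<sigma>}; [F_v : \<real>] is the cardinality of that class.\<close>
definition field_embedding :: "complex set \<Rightarrow> (complex \<Rightarrow> complex) \<Rightarrow> bool" where
  "field_embedding F \<sigma> \<longleftrightarrow> \<sigma> 1 = 1 \<and>
     (\<forall>x\<in>F. \<forall>y\<in>F. \<sigma> (x + y) = \<sigma> x + \<sigma> y \<and> \<sigma> (x * y) = \<sigma> x * \<sigma> y) \<and>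
     (\<forall>x. x \<notin> F \<longrightarrow> \<sigma> x = 0)"

definition infinite_places :: "complex set \<Rightarrow> (complex \<Rightarrow> complex) set set" where
  "infinite_places F = {{\<sigma>, cnj \<circ> \<sigma>} | \<sigma>. field_embedding F \<sigma>}"

definition local_degree :: "(complex \<Rightarrow> complex) set \<Rightarrow> nat" where
  "local_degree v = card v"

definition abs_inf :: "(complex \<Rightarrow> complex) set \<Rightarrow> complex \<Rightarrow> real" where
  "abs_inf v x = cmod ((SOME \<sigma>. \<sigma> \<in> v) x)"

text \<open>N = \<int>^d \<oplus> \<Oplus>_{i<l} \<int>/n_i; rigid part as nat \<Rightarrow> int supported on {..<d},
  torsion part as nat \<Rightarrow> int with 0 \<le> g i < n i for i < l and 0 otherwise.
  Rays form a finite set; b \<rho> is the rigid component of \<beta>(e_\<rho>); a cone of the simplicial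
  fan \<Fan> is given by its set of rays.\<close>

definition cone_span :: "nat \<Rightarrow> ('r \<Rightarrow> nat \<Rightarrow> int) \<Rightarrow> 'r set \<Rightarrow> (nat \<Rightarrow> real) set" where
  "cone_span d b \<sigma> = {y. \<exists>a. (\<forall>\<rho>\<in>\<sigma>. a \<rho> \<ge> 0) \<and> (\<forall>j<d. y j = (\<Sum>\<rho>\<in>\<sigma>. a \<rho> * real_of_int (b \<rho> j)))}"

definition simplicial_stacky_fan ::
  "nat \<Rightarrow> nat \<Rightarrow> (nat \<Rightarrow> nat) \<Rightarrow> 'r set \<Rightarrow> ('r \<Rightarrow> nat \<Rightarrow> int) \<Rightarrow> 'r set set \<Rightarrow> bool" where
  "simplicial_stacky_fan d l n Rays b Fan \<longleftrightarrow>
     (\<forall>i<l. n i > 0) \<and> finite Rays \<and> finite Fan \<and>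
     (\<forall>\<rho>\<in>Rays. (\<forall>j\<ge>d. b \<rho> j = 0) \<and> (\<exists>j<d. b \<rho> j \<noteq> 0)) \<and>
     (\<forall>\<sigma>\<in>Fan. \<sigma> \<subseteq> Rays) \<and>
     (\<forall>\<rho>\<in>Rays. {\<rho>} \<in> Fan) \<and>
     (\<forall>\<sigma>\<in>Fan. \<forall>\<tau>. \<tau> \<subseteq> \<sigma> \<longrightarrow> \<tau> \<in> Fan) \<and>
     (\<forall>\<sigma>\<in>Fan. \<forall>c. (\<forall>j<d. (\<Sum>\<rho>\<in>\<sigma>. c \<rho> * real_of_int (b \<rho> j)) = 0) \<longrightarrow> (\<forall>\<rho>\<in>\<sigma>. c \<rho> = 0)) \<and>
     (\<forall>\<sigma>\<in>Fan. \<forall>\<tau>\<in>Fan. cone_span d b \<sigma> \<inter> cone_span d b \<tau> = cone_span d b (\<sigma> \<inter> \<tau>)) \<and>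
     (\<forall>y. \<exists>\<sigma>\<in>Fan. y \<in> cone_span d b \<sigma>)"

definition coord :: "nat \<Rightarrow> ('r \<Rightarrow> nat \<Rightarrow> int) \<Rightarrow> 'r set set \<Rightarrow> 'r \<Rightarrow> (nat \<Rightarrow> real) \<Rightarrow> real" where
  "coord d b Fan \<rho> y = (SOME a. \<exists>\<sigma>\<in>Fan. (\<forall>\<rho>'. \<rho>' \<notin> \<sigma> \<longrightarrow> a \<rho>' = 0) \<and> (\<forall>\<rho>'\<in>\<sigma>. a \<rho>' \<ge> 0) \<and>
       (\<forall>j<d. y j = (\<Sum>\<rho>'\<in>\<sigma>. a \<rho>' * real_of_int (b \<rho>' j)))) \<rho>"

type_synonym Nelt = "(nat \<Rightarrow> int) \<times> (nat \<Rightarrow> int)"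
type_synonym Yelt = "(nat \<Rightarrow> real) \<times> (nat \<Rightarrow> int)"

definition Nset :: "nat \<Rightarrow> nat \<Rightarrow> (nat \<Rightarrow> nat) \<Rightarrow> Nelt set" where
  "Nset d l n = {(y, g). (\<forall>j\<ge>d. y j = 0) \<and> (\<forall>i<l. 0 \<le> g i \<and> g i < int (n i)) \<and> (\<forall>i\<ge>l. g i = 0)}"

definition rig_real :: "(nat \<Rightarrow> int) \<Rightarrow> nat \<Rightarrow> real" where
  "rig_real y = (\<lambda>j. real_of_int (y j))"

definition qmap :: "nat \<Rightarrow> 'r set \<Rightarrow> ('r \<Rightarrow> nat \<Rightarrow> int) \<Rightarrow> 'r set set \<Rightarrow> Nelt \<Rightarrow> Yelt" where
  "qmap d Rays b Fan m =
     ((\<lambda>j. \<Sum>\<rho>\<in>Rays. frac (coord d b Fan \<rho> (rig_real (fst m))) * real_of_int (b \<rho> j)), snd m)"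

definition pi0_star :: "nat \<Rightarrow> nat \<Rightarrow> (nat \<Rightarrow> nat) \<Rightarrow> 'r set \<Rightarrow> ('r \<Rightarrow> nat \<Rightarrow> int) \<Rightarrow> 'r set set \<Rightarrow> Yelt set" where
  "pi0_star d l n Rays b Fan = qmap d Rays b Fan ` Nset d l n - {((\<lambda>j. 0), (\<lambda>i. 0))}"

text \<open>I = \<Fan>(1) \<squnion> \<pi>_0^*, realised as the sum type; t, s :: I-indexed real vectors.\<close>
definition Lambda_open :: "nat \<Rightarrow> nat \<Rightarrow> (nat \<Rightarrow> nat) \<Rightarrow> 'r set \<Rightarrow> ('r \<Rightarrow> nat \<Rightarrow> int) \<Rightarrow> 'r set set
     \<Rightarrow> ('r + Yelt \<Rightarrow> real) set" where
  "Lambda_open d l n Rays b Fan = {t.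
     (\<forall>\<rho>\<in>Rays. t (Inl \<rho>) > 0) \<and>
     (\<forall>Y\<in>pi0_star d l n Rays b Fan.
        t (Inr Y) + (\<Sum>\<rho>\<in>Rays. coord d b Fan \<rho> (fst Y) * t (Inl \<rho>)) > 0)}"

definition phi :: "nat \<Rightarrow> 'r set \<Rightarrow> ('r \<Rightarrow> nat \<Rightarrow> int) \<Rightarrow> 'r set set \<Rightarrow> ('r + Yelt \<Rightarrow> real) \<Rightarrow> Nelt \<Rightarrow> real" where
  "phi d Rays b Fan s m =
     (if qmap d Rays b Fan m \<noteq> ((\<lambda>j. 0), (\<lambda>i. 0))
      then s (Inr (qmap d Rays b Fan m)) + (\<Sum>\<rho>\<in>Rays. coord d b Fan \<rho> (rig_real (fst m)) * s (Inl \<rho>))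
      else (\<Sum>\<rho>\<in>Rays. coord d b Fan \<rho> (rig_real (fst m)) * s (Inl \<rho>)))"

text \<open>\<phi>^\<infinity>_s: linear on each cone with value s_\<rho> at b_\<rho>.\<close>
definition phi_inf :: "nat \<Rightarrow> 'r set \<Rightarrow> ('r \<Rightarrow> nat \<Rightarrow> int) \<Rightarrow> 'r set set \<Rightarrow> ('r + Yelt \<Rightarrow> real) \<Rightarrow> (nat \<Rightarrow> real) \<Rightarrow> real" where
  "phi_inf d Rays b Fan s y = (\<Sum>\<rho>\<in>Rays. coord d b Fan \<rho> y * s (Inl \<rho>))"

text \<open>\<T>(F) = (F^\<times>)^d \<times> \<Prod>_{i<l} F^\<times>/(F^\<times>)^{n_i}; classes are represented as cosets.\<close>
type_synonym Telt = "(nat \<Rightarrow> complex) \<times> (nat \<Rightarrow> complex set)"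

definition torus_points :: "complex set \<Rightarrow> nat \<Rightarrow> nat \<Rightarrow> (nat \<Rightarrow> nat) \<Rightarrow> Telt set" where
  "torus_points F d l n = {(t, U).
     (\<forall>j<d. t j \<in> F - {0}) \<and> (\<forall>j\<ge>d. t j = 1) \<and>
     (\<forall>i<l. \<exists>u\<in>F - {0}. U i = {u * w ^ n i | w. w \<in> F - {0}}) \<and> (\<forall>i\<ge>l. U i = {})}"

definition log_fin :: "complex set \<Rightarrow> nat \<Rightarrow> nat \<Rightarrow> (nat \<Rightarrow> nat) \<Rightarrow> complex set \<Rightarrow> Telt \<Rightarrow> Nelt" where
  "log_fin F d l n v x =
     ((\<lambda>j. if j < d then ord_v F v (fst x j) else 0),
      (\<lambda>i. if i < l then ord_v F v (SOME u. u \<in> snd x i) mod int (n i) else 0))"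

definition log_inf :: "nat \<Rightarrow> (complex \<Rightarrow> complex) set \<Rightarrow> Telt \<Rightarrow> nat \<Rightarrow> real" where
  "log_inf d v x = (\<lambda>j. if j < d then - ln (abs_inf v (fst x j)) else 0)"

definition height ::
  "complex set \<Rightarrow> nat \<Rightarrow> nat \<Rightarrow> (nat \<Rightarrow> nat) \<Rightarrow> 'r set \<Rightarrow> ('r \<Rightarrow> nat \<Rightarrow> int) \<Rightarrow> 'r set set
     \<Rightarrow> ('r + Yelt \<Rightarrow> real) \<Rightarrow> Telt \<Rightarrow> real" where
  "height F d l n Rays b Fan s x =
     (\<Prod>v\<in>{v\<in>finite_places F. log_fin F d l n v x \<noteq> ((\<lambda>j. 0), (\<lambda>i. 0))}.
         real (q_fin F v) powr phi d Rays b Fan s (log_fin F d l n v x)) *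
     (\<Prod>v\<in>infinite_places F.
         exp (real (local_degree v) * phi_inf d Rays b Fan s (log_inf d v x)))"

definition alpha :: "complex set \<Rightarrow> nat \<Rightarrow> nat \<Rightarrow> (nat \<Rightarrow> nat) \<Rightarrow> Telt \<Rightarrow> complex set \<Rightarrow> Nelt" where
  "alpha F d l n x = (\<lambda>v. if v \<in> finite_places F then log_fin F d l n v x else ((\<lambda>j. 0), (\<lambda>i. 0)))"

end

theory Submission
  imports Defs "Jordan_Normal_Form.Char_Poly" "HOL-Computational_Algebra.Primes" "HOL-Library.FuncSet"
begin

(*
  Rankin's trick.  Let delta > 0 be the minimum of phi_t on N - {0}.  If H(t, x) <= B, then every
  finite place v with log_v(x) <> 0 has norm q_v <= B^(1/delta), and m = log_v(x) satisfies
  2^phi_t(m) <= B; since phi_t grows linearly on N, only finitely many such m exist.  Hence alpha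
  maps the points of height <= B into a finite product of finite sets.  A candidate value f gets the
  weight prod_v q_v^(-sigma phi_t(f_v)), which is >= B^(-sigma) on actual values, so their number is
  at most B^sigma times the total weight.  The total weight factors as prod_v (1 + O(q_v^(-2))) once
  sigma >= 2/delta, and this product is bounded independently of B: at most [F : Q] places lie
  above a prime p, each has q_v >= p, and sum_p p^(-2) converges.

  The arithmetic input is elementary: algebraic integers are closed under + and * because they are
  eigenvalues of integer matrices, and any [F : Q] + 1 elements of F are Z-linearly dependent, which
  bounds the residue rings O/P, the number of places above p, and makes every x in F a quotient of
  integers, so that ord_v(x) = 0 for almost all v.
*)

section \<open>Algebraic integers\<close>

definition int_span :: "('i \<Rightarrow> 'a :: comm_ring_1) \<Rightarrow> 'i set \<Rightarrow> 'a set" where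
  "int_span v I = range (\<lambda>c. \<Sum>i\<in>I. of_int (c i) * v i)"

lemma int_span_memI: "a = (\<Sum>i\<in>I. of_int (c i) * v i) \<Longrightarrow> a \<in> int_span v I"
  unfolding int_span_def by blast

lemma int_span_memE:
  assumes "a \<in> int_span v I"
  obtains c where "a = (\<Sum>i\<in>I. of_int (c i) * v i)"
  using assms unfolding int_span_def by blast

lemma int_span_zero: "0 \<in> int_span v I"
  by (rule int_span_memI[where c="\<lambda>_. 0"]) simp

lemma int_span_base:
  assumes "finite I" "i \<in> I"
  shows "v i \<in> int_span v I"
proof (rule int_span_memI)
  have "(\<Sum>j\<in>I. of_int (if j = i then 1 else 0) * v j) = (\<Sum>j\<in>I. if j = i then v j else 0)"
    by (intro sum.cong) auto
  thus "v i = (\<Sum>j\<in>I. of_int (if j = i then 1 else 0) * v j)" using assms by simp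
qed

lemma int_span_add:
  assumes "a \<in> int_span v I" "b \<in> int_span v I"
  shows "a + b \<in> int_span v I"
proof -
  obtain c e where "a = (\<Sum>i\<in>I. of_int (c i) * v i)" "b = (\<Sum>i\<in>I. of_int (e i) * v i)"
    using assms by (metis int_span_memE)
  hence "a + b = (\<Sum>i\<in>I. of_int (c i + e i) * v i)" by (simp add: sum.distrib distrib_right)
  thus ?thesis by (rule int_span_memI)
qed

lemma int_span_scale:
  assumes "a \<in> int_span v I"
  shows "of_int k * a \<in> int_span v I"
proof -
  obtain c where "a = (\<Sum>i\<in>I. of_int (c i) * v i)" using assms by (rule int_span_memE)
  hence "of_int k * a = (\<Sum>i\<in>I. of_int (k * c i) * v i)" by (simp add: sum_distrib_left mult.assoc)
  thus ?thesis by (rule int_span_memI)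
qed

lemma int_span_sum:
  assumes "\<And>x. x \<in> A \<Longrightarrow> f x \<in> int_span v I"
  shows "sum f A \<in> int_span v I"
  using assms
  by (induction A rule: infinite_finite_induct) (simp_all add: int_span_zero int_span_add)

lemma int_span_mult_stable:
  assumes "\<And>i. i \<in> I \<Longrightarrow> z * v i \<in> int_span v I" "a \<in> int_span v I"
  shows "z * a \<in> int_span v I"
proof -
  obtain c where "a = (\<Sum>i\<in>I. of_int (c i) * v i)" using assms(2) by (rule int_span_memE)
  hence "z * a = (\<Sum>i\<in>I. of_int (c i) * (z * v i))" by (simp add: sum_distrib_left mult_ac)
  thus ?thesis using assms(1) by (simp add: int_span_sum int_span_scale)
qed

lemma int_span_mult:
  assumes "a \<in> int_span u A" "b \<in> int_span w B"
  shows "a * b \<in> int_span (\<lambda>(i, j). u i * w j) (A \<times> B)"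
proof -
  obtain c e where ab: "a = (\<Sum>i\<in>A. of_int (c i) * u i)" "b = (\<Sum>j\<in>B. of_int (e j) * w j)"
    using assms by (metis int_span_memE)
  have "a * b = (\<Sum>(i, j)\<in>A \<times> B. of_int (c i * e j) * (u i * w j))"
    unfolding ab sum_product sum.cartesian_product by (simp add: mult_ac)
  also have "\<dots> = (\<Sum>ij\<in>A \<times> B. of_int ((\<lambda>(i, j). c i * e j) ij) * (\<lambda>(i, j). u i * w j) ij)"
    by (simp add: case_prod_beta)
  finally show ?thesis by (rule int_span_memI)
qed

text \<open>An eigenvalue of an integer matrix is a root of its monic characteristic polynomial.\<close>
lemma algebraic_int_of_integer_eigenvector:
  fixes z :: complex and v :: "nat \<Rightarrow> complex" and A :: "nat \<Rightarrow> nat \<Rightarrow> int"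
  assumes "s0 < n" "v s0 \<noteq> 0"
    and eigen: "\<And>s. s < n \<Longrightarrow> z * v s = (\<Sum>t<n. of_int (A s t) * v t)"
  shows "algebraic_int z"
proof -
  define M where "M = mat n n (\<lambda>(s, t). A s t)"
  define w where "w = vec n v"
  have M: "M \<in> carrier_mat n n" unfolding M_def by auto
  have Mc: "map_mat of_int M \<in> carrier_mat n n" using M by auto
  have "map_mat of_int M *\<^sub>v w = z \<cdot>\<^sub>v w"
  proof (rule eq_vecI)
    fix i assume "i < dim_vec (z \<cdot>\<^sub>v w)"
    hence i: "i < n" by (simp add: w_def)
    have "(map_mat of_int M *\<^sub>v w) $ i = (\<Sum>t<n. of_int (A i t) * v t)"
      using i unfolding M_def w_def by (simp add: mult_mat_vec_def scalar_prod_def lessThan_atLeast0)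
    thus "(map_mat of_int M *\<^sub>v w) $ i = (z \<cdot>\<^sub>v w) $ i" using i eigen[OF i] by (simp add: w_def)
  qed (simp add: w_def M_def)
  moreover have "w \<noteq> 0\<^sub>v n" "w \<in> carrier_vec n"
    using assms(1,2) unfolding w_def by (metis index_vec index_zero_vec(1), simp)
  ultimately have "eigenvalue (map_mat of_int M) z"
    unfolding eigenvalue_def eigenvector_def using Mc by auto
  hence "poly (char_poly (map_mat of_int M)) z = 0" using eigenvalue_root_char_poly[OF Mc] by blast
  moreover have "char_poly (map_mat of_int M) = map_poly of_int (char_poly M)"
    by (rule of_int_hom.char_poly_hom[OF M])
  moreover have "lead_coeff (char_poly M) = 1" using degree_monic_char_poly[OF M] by simp
  ultimately show ?thesis unfolding algebraic_int_altdef_ipoly by metis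
qed

lemma algebraic_int_if_int_span_stable:
  fixes z :: complex
  assumes I: "finite I" "i0 \<in> I" "v i0 \<noteq> 0"
    and stable: "\<And>i. i \<in> I \<Longrightarrow> z * v i \<in> int_span v I"
  shows "algebraic_int z"
proof -
  obtain h where h: "bij_betw h {..<card I} I"
    using ex_bij_betw_nat_finite[OF I(1)] by (auto simp: atLeast0LessThan)
  have "\<forall>i\<in>I. \<exists>c. z * v i = (\<Sum>j\<in>I. of_int (c j) * v j)"
    using stable by (metis int_span_memE)
  then obtain a where a: "\<And>i. i \<in> I \<Longrightarrow> z * v i = (\<Sum>j\<in>I. of_int (a i j) * v j)"
    by metis
  obtain s0 where s0: "s0 < card I" "h s0 = i0"
    using h I(2) unfolding bij_betw_def by (metis imageE lessThan_iff)
  show ?thesis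
  proof (rule algebraic_int_of_integer_eigenvector[of s0 "card I" "v \<circ> h"])
    show "s0 < card I" "(v \<circ> h) s0 \<noteq> 0" using s0 I(3) by auto
    fix s assume "s < card I"
    hence "h s \<in> I" using h by (auto simp: bij_betw_def)
    hence "z * v (h s) = (\<Sum>j\<in>I. of_int (a (h s) j) * v j)" by (rule a)
    also have "\<dots> = (\<Sum>t<card I. of_int (a (h s) (h t)) * v (h t))"
      by (rule sum.reindex_bij_betw[OF h, symmetric])
    finally show "z * (v \<circ> h) s = (\<Sum>t<card I. of_int (a (h s) (h t)) * (v \<circ> h) t)" by simp
  qed
qed

lemma power_in_int_span_of_monic_root:
  fixes x :: complex
  assumes p: "lead_coeff p = 1" "poly (map_poly of_int p) x = 0" and m: "m \<le> degree p"
  shows "x ^ m \<in> int_span (power x) {..<degree p}"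
proof (cases "m < degree p")
  case True
  thus ?thesis by (intro int_span_base) auto
next
  case False
  hence m: "m = degree p" using m by simp
  have "0 = (\<Sum>i\<le>degree p. of_int (coeff p i) * x ^ i)"
    using p(2) by (simp add: poly_altdef degree_map_poly coeff_map_poly)
  also have "\<dots> = (\<Sum>i<degree p. of_int (coeff p i) * x ^ i) + x ^ degree p"
    using p(1) by (simp add: lessThan_Suc_atMost[symmetric])
  finally have "x ^ m = (\<Sum>i<degree p. of_int (- coeff p i) * x ^ i)"
    unfolding m by (simp add: eq_neg_iff_add_eq_0 add.commute sum_negf)
  thus ?thesis by (rule int_span_memI)
qed

lemma monic_poly_with_root_nonconstant:
  fixes x :: complex
  assumes "lead_coeff p = 1" "poly (map_poly of_int p) x = 0"
  shows "degree p > 0"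
proof (rule ccontr)
  assume "\<not> degree p > 0"
  hence "p = [:1:]" using assms(1) by (metis degree_0_id lead_coeff_pCons(1) neq0_conv pCons_0_0 zero_neq_one)
  thus False using assms(2) by simp
qed

text \<open>The integral combinations of the monomials \<open>x\<^sup>i y\<^sup>j\<close> below the degrees of monic equations
  for \<open>x\<close> and \<open>y\<close> form a finitely generated module that is stable under \<open>x + y\<close> and \<open>x y\<close>.\<close>
lemma algebraic_int_times_plus:
  fixes x y :: complex
  assumes "algebraic_int x" "algebraic_int y"
  shows "algebraic_int (x * y) \<and> algebraic_int (x + y)"
proof -
  obtain p where p: "lead_coeff p = 1" "poly (map_poly of_int p) x = 0"
    using assms(1) unfolding algebraic_int_altdef_ipoly by auto
  obtain q where q: "lead_coeff q = 1" "poly (map_poly of_int q) y = 0"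
    using assms(2) unfolding algebraic_int_altdef_ipoly by auto
  define I where "I = {..<degree p} \<times> {..<degree q}"
  define v where "v = (\<lambda>(i, j). x ^ i * y ^ j)"
  have I: "finite I" "(0, 0) \<in> I" "v (0, 0) \<noteq> 0"
    using monic_poly_with_root_nonconstant[OF p] monic_poly_with_root_nonconstant[OF q]
    by (auto simp: I_def v_def)
  have monomial: "x ^ i * y ^ j \<in> int_span v I" if "i \<le> degree p" "j \<le> degree q" for i j
    unfolding v_def I_def
    using int_span_mult[of "x ^ i" "power x" _ "y ^ j" "power y",
        OF power_in_int_span_of_monic_root[OF p that(1)] power_in_int_span_of_monic_root[OF q that(2)]]
    by simp
  have x_stable: "x * v ij \<in> int_span v I" and y_stable: "y * v ij \<in> int_span v I"
    if "ij \<in> I" for ij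
    using that monomial[of "fst ij + 1" "snd ij"] monomial[of "fst ij" "snd ij + 1"]
    by (auto simp: I_def v_def mult_ac)
  have "x * y * v ij \<in> int_span v I" if "ij \<in> I" for ij
    using int_span_mult_stable[of I x v, OF x_stable y_stable[OF that]] by (simp add: mult.assoc)
  moreover have "(x + y) * v ij \<in> int_span v I" if "ij \<in> I" for ij
    using int_span_add[OF x_stable[OF that] y_stable[OF that]] by (simp add: distrib_right)
  ultimately show ?thesis using algebraic_int_if_int_span_stable[of I "(0, 0)" v, OF I] by blast
qed

lemma algebraic_int_times: "algebraic_int x \<Longrightarrow> algebraic_int y \<Longrightarrow> algebraic_int (x * y :: complex)"
  and algebraic_int_plus: "algebraic_int x \<Longrightarrow> algebraic_int y \<Longrightarrow> algebraic_int (x + y :: complex)"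
  using algebraic_int_times_plus by blast+

lemma algebraic_int_leading_coeff_times_root:
  fixes x :: complex and c :: "nat \<Rightarrow> int"
  assumes root: "(\<Sum>i\<le>k. of_int (c i) * x ^ i) = 0" and "c k \<noteq> 0"
  shows "algebraic_int (of_int (c k) * x)"
proof (cases "k = 0")
  case True
  thus ?thesis using assms by simp
next
  case False
  define lc where "lc = c k"
  text \<open>\<open>g(X) = lc\<^sup>k\<^sup>-\<^sup>1 \<Sum> c\<^sub>i (X / lc)\<^sup>i\<close> is monic with integer coefficients.\<close>
  define g :: "complex poly" where
    "g = monom 1 k + (\<Sum>i<k. monom (of_int (c i * lc ^ (k - 1 - i))) i)"
  have coeff_g: "coeff g j = (if j = k then 1 else 0) + (\<Sum>i<k. if i = j then of_int (c i * lc ^ (k - 1 - i)) else 0)" for j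
    unfolding g_def by (simp add: coeff_sum coeff_monom)
  have "degree g = k"
  proof (rule antisym)
    show "degree g \<le> k" by (intro degree_le) (auto simp: coeff_g intro!: sum.neutral)
    show "k \<le> degree g" by (intro le_degree) (simp add: coeff_g)
  qed
  hence "lead_coeff g = 1" by (simp add: coeff_g)
  moreover have "\<forall>i. coeff g i \<in> \<int>" unfolding coeff_g by (auto intro: Ints_add Ints_sum)
  moreover have "poly g (of_int lc * x) = 0"
  proof -
    have "poly g (of_int lc * x) = (of_int lc * x) ^ k + (\<Sum>i<k. of_int (c i * lc ^ (k - 1 - i)) * (of_int lc * x) ^ i)"
      unfolding g_def by (simp add: poly_sum poly_monom)
    also have "(\<Sum>i<k. of_int (c i * lc ^ (k - 1 - i)) * (of_int lc * x) ^ i) = (\<Sum>i<k. of_int lc ^ (k - 1) * (of_int (c i) * x ^ i))"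
    proof (intro sum.cong refl)
      fix i assume "i \<in> {..<k}"
      hence "k - 1 - i + i = k - 1" by simp
      hence "(of_int lc :: complex) ^ (k - 1 - i) * of_int lc ^ i = of_int lc ^ (k - 1)"
        by (metis power_add)
      thus "of_int (c i * lc ^ (k - 1 - i)) * (of_int lc * x) ^ i = of_int lc ^ (k - 1) * (of_int (c i) * x ^ i)"
        by (simp add: power_mult_distrib mult_ac)
    qed
    also have "(of_int lc * x) ^ k = of_int lc ^ (k - 1) * (of_int lc * x ^ k)"
    proof -
      have "(of_int lc :: complex) ^ k = of_int lc ^ (k - 1) * of_int lc"
        using False by (metis Suc_pred' neq0_conv power_Suc2)
      thus ?thesis by (simp add: power_mult_distrib mult_ac)
    qed
    finally have "poly g (of_int lc * x) = of_int lc ^ (k - 1) * (\<Sum>i\<le>k. of_int (c i) * x ^ i)"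
      by (simp add: sum_distrib_left distrib_left lessThan_Suc_atMost[symmetric] lc_def)
    thus ?thesis using root by simp
  qed
  ultimately show ?thesis unfolding lc_def by (intro algebraic_int.intros[of g]) auto
qed

lemma common_denominator:
  fixes r :: "'i \<Rightarrow> rat"
  assumes "finite A"
  obtains N :: int and c :: "'i \<Rightarrow> int" where "N > 0" "\<And>i. i \<in> A \<Longrightarrow> of_int (c i) = of_int N * r i"
proof
  define den where "den i = snd (quotient_of (r i))" for i
  define N where "N = (\<Prod>i\<in>A. den i)"
  have den: "den i > 0" "r i = of_int (fst (quotient_of (r i))) / of_int (den i)" for i
    unfolding den_def by (simp_all add: quotient_of_denom_pos' quotient_of_div[OF surjective_pairing])
  show "N > 0" unfolding N_def using den(1) by (intro prod_pos) auto
  fix i assume "i \<in> A"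
  hence "N = den i * (\<Prod>j\<in>A - {i}. den j)" unfolding N_def using assms by (simp add: prod.remove)
  thus "of_int (fst (quotient_of (r i)) * (\<Prod>j\<in>A - {i}. den j)) = of_int N * r i"
    using den[of i] by (simp add: field_simps)
qed

section \<open>Arithmetic of the number field\<close>

definition residue_class :: "'a :: plus set \<Rightarrow> 'a \<Rightarrow> 'a set" where
  "residue_class P a = (\<lambda>p. a + p) ` P"

definition indep_mod :: "'a :: comm_ring_1 set \<Rightarrow> int \<Rightarrow> (nat \<Rightarrow> 'a) \<Rightarrow> nat \<Rightarrow> bool" where
  "indep_mod P p y k \<longleftrightarrow> (\<forall>c. (\<Sum>i<k. of_int (c i) * y i) \<in> P \<longrightarrow> (\<forall>i<k. p dvd c i))"

interpretation rat_vec: vector_space "\<lambda>(q :: rat) (z :: complex). of_rat q * z"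
  by unfold_locales (auto simp: algebra_simps of_rat_add of_rat_mult)

locale number_field_setting =
  fixes F :: "complex set"
  assumes number_field: "number_field F"
begin

abbreviation "\<O> \<equiv> ring_of_integers F"

lemma F_zero: "0 \<in> F" and F_one: "1 \<in> F"
  and F_add: "x \<in> F \<Longrightarrow> y \<in> F \<Longrightarrow> x + y \<in> F"
  and F_mult: "x \<in> F \<Longrightarrow> y \<in> F \<Longrightarrow> x * y \<in> F"
  and F_uminus: "x \<in> F \<Longrightarrow> - x \<in> F"
  using number_field unfolding number_field_def by auto

lemma F_of_int: "of_int k \<in> F"
proof -
  have "of_nat m \<in> F" for m by (induction m) (auto intro: F_zero F_one F_add simp: add.commute)
  thus ?thesis
  proof (cases "k \<ge> 0")
    case False
    have "- of_nat (nat (- k)) \<in> F" using F_uminus \<open>\<And>m. of_nat m \<in> F\<close> by blast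
    thus ?thesis using False by simp
  qed (metis nonneg_eq_int of_int_of_nat_eq)
qed

lemma F_power: "x \<in> F \<Longrightarrow> x ^ n \<in> F"
  by (induction n) (auto intro: F_one F_mult)

lemma integers_iff: "x \<in> \<O> \<longleftrightarrow> x \<in> F \<and> algebraic_int x"
  unfolding ring_of_integers_def algebraic_integer_def algebraic_int_altdef_ipoly by auto

lemma O_subset_F: "x \<in> \<O> \<Longrightarrow> x \<in> F" using integers_iff by auto
lemma O_one: "1 \<in> \<O>" unfolding integers_iff using F_one by simp
lemma O_add: "x \<in> \<O> \<Longrightarrow> y \<in> \<O> \<Longrightarrow> x + y \<in> \<O>"
  unfolding integers_iff using F_add algebraic_int_plus by blast
lemma O_mult: "x \<in> \<O> \<Longrightarrow> y \<in> \<O> \<Longrightarrow> x * y \<in> \<O>"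
  unfolding integers_iff using F_mult algebraic_int_times by blast
lemma O_uminus: "x \<in> \<O> \<Longrightarrow> - x \<in> \<O>"
  unfolding integers_iff using F_uminus algebraic_int_minus by blast
lemma O_diff: "x \<in> \<O> \<Longrightarrow> y \<in> \<O> \<Longrightarrow> x - y \<in> \<O>"
  using O_add[of x "- y"] O_uminus by simp
lemma O_of_int: "of_int k \<in> \<O>" unfolding integers_iff using F_of_int by simp
lemma O_power: "x \<in> \<O> \<Longrightarrow> x ^ n \<in> \<O>"
  by (induction n) (auto intro: O_one O_mult)
lemma O_sum: "(\<And>i. i \<in> A \<Longrightarrow> f i \<in> \<O>) \<Longrightarrow> sum f A \<in> \<O>"
  using O_of_int[of 0] by (induction A rule: infinite_finite_induct) (auto intro: O_add)
lemma O_prod: "(\<And>i. i \<in> A \<Longrightarrow> f i \<in> \<O>) \<Longrightarrow> prod f A \<in> \<O>"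
  by (induction A rule: infinite_finite_induct) (auto intro: O_one O_mult)

text \<open>A finite \<open>\<rat>\<close>-spanning set of \<open>F\<close>; its size \<open>D\<close> bounds the degree \<open>[F : \<rat>]\<close>.\<close>
definition spanning_set :: "complex set" where
  "spanning_set = (SOME B. finite B \<and> B \<subseteq> F \<and>
        (\<forall>x\<in>F. \<exists>c. (\<forall>b\<in>B. c b \<in> \<rat>) \<and> x = (\<Sum>b\<in>B. c b * b)))"

abbreviation "D \<equiv> card spanning_set"

lemma finite_spanning_set: "finite spanning_set"
  and F_subset_span: "F \<subseteq> rat_vec.span spanning_set"
proof -
  have "\<exists>B. finite B \<and> B \<subseteq> F \<and> (\<forall>x\<in>F. \<exists>c. (\<forall>b\<in>B. c b \<in> \<rat>) \<and> x = (\<Sum>b\<in>B. c b * b))"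
    using number_field unfolding number_field_def by blast
  from someI_ex[OF this] have B: "finite spanning_set"
    "\<And>x. x \<in> F \<Longrightarrow> \<exists>c. (\<forall>b\<in>spanning_set. c b \<in> \<rat>) \<and> x = (\<Sum>b\<in>spanning_set. c b * b)"
    unfolding spanning_set_def by blast+
  show "finite spanning_set" using B(1) .
  show "F \<subseteq> rat_vec.span spanning_set"
  proof
    fix x assume "x \<in> F"
    then obtain c where c: "\<forall>b\<in>spanning_set. c b \<in> \<rat>" "x = (\<Sum>b\<in>spanning_set. c b * b)"
      using B(2) by blast
    have "\<forall>b\<in>spanning_set. \<exists>q. c b = of_rat q" using c(1) by (auto elim: Rats_cases)
    then obtain r where "\<forall>b\<in>spanning_set. c b = of_rat (r b)" by metis
    hence "x = (\<Sum>b\<in>spanning_set. of_rat (r b) * b)" using c(2) by simp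
    also have "\<dots> \<in> rat_vec.span spanning_set"
      by (intro rat_vec.span_sum rat_vec.span_scale rat_vec.span_base)
    finally show "x \<in> rat_vec.span spanning_set" .
  qed
qed

lemma rat_linear_dependence:
  assumes "\<And>i. i \<le> D \<Longrightarrow> y i \<in> F"
  shows "\<exists>r :: nat \<Rightarrow> rat. (\<Sum>i\<le>D. of_rat (r i) * y i) = 0 \<and> (\<exists>i\<le>D. r i \<noteq> 0)"
proof (cases "inj_on y {..D}")
  case False
  then obtain i j where ij: "i \<le> D" "j \<le> D" "i \<noteq> j" "y i = y j" unfolding inj_on_def by auto
  define r where "r k = (if k = i then 1 else if k = j then -1 else 0 :: rat)" for k
  have "(\<Sum>k\<le>D. of_rat (r k) * y k) = (\<Sum>k\<le>D. (if k = i then y k else 0) - (if k = j then y k else 0))"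
    by (intro sum.cong) (auto simp: r_def ij(3))
  also have "\<dots> = 0" using ij by (simp add: sum_subtractf)
  finally show ?thesis using ij by (intro exI[of _ r]) (auto simp: r_def)
next
  case True
  have "rat_vec.dependent (y ` {..D})"
  proof (rule ccontr)
    assume "\<not> rat_vec.dependent (y ` {..D})"
    moreover have "y ` {..D} \<subseteq> rat_vec.span spanning_set" using F_subset_span assms by auto
    ultimately have "card (y ` {..D}) \<le> D"
      using rat_vec.independent_span_bound[OF finite_spanning_set] by blast
    thus False using True by (simp add: card_image)
  qed
  then obtain T u where T: "finite T" "T \<subseteq> y ` {..D}" "(\<Sum>v\<in>T. of_rat (u v) * v) = 0" "\<exists>v\<in>T. u v \<noteq> 0"
    unfolding rat_vec.dependent_explicit by blast
  define r where "r i = (if y i \<in> T then u (y i) else 0)" for i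
  define J where "J = {i\<in>{..D}. y i \<in> T}"
  have yJ: "y ` J = T" using T(2) unfolding J_def by auto
  have "(\<Sum>i\<le>D. of_rat (r i) * y i) = (\<Sum>i\<in>J. of_rat (u (y i)) * y i)"
    by (rule sum.mono_neutral_cong_right) (auto simp: J_def r_def)
  also have "\<dots> = (\<Sum>v\<in>T. of_rat (u v) * v)"
    using sum.reindex[OF inj_on_subset[OF True, of J], of "\<lambda>v. of_rat (u v) * v"] yJ
    by (simp add: J_def subset_eq)
  finally have "(\<Sum>i\<le>D. of_rat (r i) * y i) = 0" using T(3) by simp
  moreover have "\<exists>i\<le>D. r i \<noteq> 0"
  proof -
    obtain v where "v \<in> T" "u v \<noteq> 0" using T(4) by blast
    moreover obtain i where "i \<in> J" "v = y i" using \<open>v \<in> T\<close> yJ by blast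
    ultimately show ?thesis unfolding J_def r_def by auto
  qed
  ultimately show ?thesis by blast
qed

lemma int_linear_dependence:
  assumes "\<And>i. i \<le> D \<Longrightarrow> y i \<in> F"
  shows "\<exists>c :: nat \<Rightarrow> int. (\<Sum>i\<le>D. of_int (c i) * y i) = 0 \<and> (\<exists>i\<le>D. c i \<noteq> 0)"
proof -
  obtain r i0 where r: "(\<Sum>i\<le>D. of_rat (r i) * y i) = 0" "i0 \<le> D" "r i0 \<noteq> 0"
    using rat_linear_dependence[of y, OF assms] by blast
  obtain N c where N: "N > 0" "\<And>i. i \<in> {..D} \<Longrightarrow> of_int (c i) = of_int N * r i"
    using common_denominator[of "{..D}" r] by blast
  have c: "(of_int (c i) :: complex) = of_int N * of_rat (r i)" if "i \<le> D" for i
    using arg_cong[OF N(2)[of i], of "of_rat :: rat \<Rightarrow> complex"] that by (simp add: of_rat_mult)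
  have "(\<Sum>i\<le>D. of_int (c i) * y i) = (\<Sum>i\<le>D. of_int N * (of_rat (r i) * y i))"
    by (intro sum.cong refl) (simp add: c)
  also have "\<dots> = of_int N * (\<Sum>i\<le>D. of_rat (r i) * y i)" by (rule sum_distrib_left[symmetric])
  moreover have "c i0 \<noteq> 0" using c[OF r(2)] N(1) r(3) by auto
  ultimately show ?thesis using r(1,2) by auto
qed

text \<open>A relation of minimal size cannot have all its coefficients divisible by \<open>p\<close>.\<close>
lemma int_linear_dependence_mod:
  assumes "\<And>i. i \<le> D \<Longrightarrow> y i \<in> F" and p: "(p::int) \<ge> 2"
  shows "\<exists>c :: nat \<Rightarrow> int. (\<Sum>i\<le>D. of_int (c i) * y i) = 0 \<and> (\<exists>i\<le>D. \<not> p dvd c i)"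
proof -
  define rel where "rel c \<longleftrightarrow> (\<Sum>i\<le>D. of_int (c i) * y i) = 0 \<and> (\<exists>i\<le>D. c i \<noteq> (0::int))" for c
  define size where "size c = (\<Sum>i\<le>D. nat \<bar>c i\<bar>)" for c :: "nat \<Rightarrow> int"
  obtain c0 where "rel c0" using int_linear_dependence[of y] assms(1) unfolding rel_def by blast
  then obtain c where c: "rel c" and minimal: "\<And>c'. rel c' \<Longrightarrow> size c \<le> size c'"
    using ex_has_least_nat[of rel c0 size] by blast
  show ?thesis
  proof (rule ccontr)
    assume "\<not> ?thesis"
    hence dvd: "\<And>i. i \<le> D \<Longrightarrow> p dvd c i" using c unfolding rel_def by blast
    define c' where "c' i = c i div p" for i
    have cc': "c i = p * c' i" if "i \<le> D" for i using dvd[OF that] unfolding c'_def by simp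
    have "(\<Sum>i\<le>D. of_int (c i) * (y i :: complex)) = (\<Sum>i\<le>D. of_int p * (of_int (c' i) * y i))"
      by (intro sum.cong refl) (simp add: cc')
    hence "of_int p * (\<Sum>i\<le>D. of_int (c' i) * y i) = (\<Sum>i\<le>D. of_int (c i) * (y i :: complex))"
      by (simp add: sum_distrib_left)
    hence "(\<Sum>i\<le>D. of_int (c' i) * y i) = 0" using c p unfolding rel_def by simp
    moreover obtain i where i: "i \<le> D" "c i \<noteq> 0" using c unfolding rel_def by auto
    ultimately have "rel c'" using cc'[OF i(1)] unfolding rel_def by auto
    have "nat \<bar>c' j\<bar> \<le> nat \<bar>c j\<bar>" if "j \<le> D" for j
    proof -
      have "1 * \<bar>c' j\<bar> \<le> p * \<bar>c' j\<bar>" using p by (intro mult_right_mono) auto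
      thus ?thesis using cc'[OF that] p by (simp add: abs_mult)
    qed
    moreover have "nat \<bar>c' i\<bar> < nat \<bar>c i\<bar>" using cc'[OF i(1)] p i(2) by (simp add: abs_mult)
    ultimately have "size c' < size c" unfolding size_def using i by (intro sum_strict_mono_ex1) auto
    thus False using minimal[OF \<open>rel c'\<close>] by simp
  qed
qed

lemma ideal_subset: "is_ideal \<O> P \<Longrightarrow> P \<subseteq> \<O>" unfolding is_ideal_def by blast
lemma ideal_zero: "is_ideal \<O> P \<Longrightarrow> 0 \<in> P" unfolding is_ideal_def by blast
lemma ideal_add: "is_ideal \<O> P \<Longrightarrow> a \<in> P \<Longrightarrow> b \<in> P \<Longrightarrow> a + b \<in> P" unfolding is_ideal_def by blast
lemma ideal_uminus: "is_ideal \<O> P \<Longrightarrow> a \<in> P \<Longrightarrow> - a \<in> P" unfolding is_ideal_def by blast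
lemma ideal_mult_left: "is_ideal \<O> P \<Longrightarrow> r \<in> \<O> \<Longrightarrow> a \<in> P \<Longrightarrow> r * a \<in> P" unfolding is_ideal_def by blast
lemma ideal_mult_right: "is_ideal \<O> P \<Longrightarrow> r \<in> \<O> \<Longrightarrow> a \<in> P \<Longrightarrow> a * r \<in> P"
  using ideal_mult_left[of P r a] by (simp add: mult.commute)
lemma ideal_diff: "is_ideal \<O> P \<Longrightarrow> a \<in> P \<Longrightarrow> b \<in> P \<Longrightarrow> a - b \<in> P"
  using ideal_add[of P a "- b"] ideal_uminus by simp
lemma ideal_of_int_mult: "is_ideal \<O> P \<Longrightarrow> a \<in> P \<Longrightarrow> of_int k * a \<in> P"
  using ideal_mult_left[OF _ O_of_int] by blast
lemma ideal_sum: "is_ideal \<O> P \<Longrightarrow> (\<And>i. i \<in> A \<Longrightarrow> f i \<in> P) \<Longrightarrow> sum f A \<in> P"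
  by (induction A rule: infinite_finite_induct) (auto intro: ideal_zero ideal_add)
lemma ideal_power:
  assumes I: "is_ideal \<O> P" and a: "a \<in> P" and n: "n \<ge> 1"
  shows "a ^ n \<in> P"
proof -
  obtain m where "n = Suc m" using n by (cases n) auto
  moreover have "a ^ m \<in> \<O>" using a ideal_subset[OF I] by (auto intro: O_power)
  ultimately show ?thesis using ideal_mult_left[OF I _ a] by (metis mult.commute power_Suc)
qed

lemma ideal_of_int_multiple:
  assumes I: "is_ideal \<O> P" and "of_int p \<in> P" "p dvd k" "z \<in> \<O>"
  shows "of_int k * z \<in> P"
proof -
  obtain e where "k = p * e" using \<open>p dvd k\<close> by blast
  moreover have "of_int e * (of_int p * z) \<in> P"
    using assms by (intro ideal_of_int_mult ideal_mult_right)
  ultimately show ?thesis by (simp add: mult_ac)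
qed

lemma prime_ideal_is_ideal: "is_prime_ideal \<O> P \<Longrightarrow> is_ideal \<O> P" unfolding is_prime_ideal_def by blast
lemma prime_ideal_mult: "is_prime_ideal \<O> P \<Longrightarrow> a \<in> \<O> \<Longrightarrow> b \<in> \<O> \<Longrightarrow> a * b \<in> P \<Longrightarrow> a \<in> P \<or> b \<in> P"
  unfolding is_prime_ideal_def by blast
lemma prime_ideal_one_notin:
  assumes P: "is_prime_ideal \<O> P"
  shows "1 \<notin> P"
proof
  assume "1 \<in> P"
  hence "r \<in> P" if "r \<in> \<O>" for r
    using ideal_mult_left[OF prime_ideal_is_ideal[OF P] that \<open>1 \<in> P\<close>] by simp
  hence "P = \<O>" using ideal_subset[OF prime_ideal_is_ideal[OF P]] by blast
  thus False using P unfolding is_prime_ideal_def by blast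
qed

lemma prime_ideal_power_notin:
  assumes P: "is_prime_ideal \<O> P" and a: "a \<in> \<O>" "a \<notin> P"
  shows "a ^ n \<notin> P"
proof (induction n)
  case (Suc n)
  thus ?case using prime_ideal_mult[OF P a(1) O_power[OF a(1)]] a(2) by auto
qed (simp add: prime_ideal_one_notin[OF P])

lemma prime_ideal_prod_notin:
  assumes "finite J" and Q: "is_prime_ideal \<O> Q" and y: "\<And>j. j \<in> J \<Longrightarrow> y j \<in> \<O> - Q"
  shows "prod y J \<notin> Q"
  using assms(1) y
proof (induction J rule: finite_induct)
  case (insert j J)
  have "prod y J \<in> \<O>" using insert.prems by (intro O_prod) auto
  thus ?case using insert prime_ideal_mult[OF Q, of "y j" "prod y J"] by auto
qed (simp add: prime_ideal_one_notin[OF Q])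

lemma place_prime: "P \<in> finite_places F \<Longrightarrow> is_prime_ideal \<O> P" unfolding finite_places_def by blast
lemma place_ideal: "P \<in> finite_places F \<Longrightarrow> is_ideal \<O> P" using place_prime prime_ideal_is_ideal by blast

text \<open>Dividing a monic equation for \<open>a\<close> by the lowest power of \<open>a\<close> occurring in it exhibits
  the lowest nonzero coefficient as a multiple of \<open>a\<close>.\<close>
lemma nonzero_int_multiple:
  assumes a: "a \<in> \<O>" "a \<noteq> 0"
  obtains c :: int and r where "c \<noteq> 0" "r \<in> \<O>" "of_int c = a * r"
proof -
  obtain p where p: "poly (map_poly of_int p) a = 0" "lead_coeff p = (1::int)"
    using a(1) integers_iff algebraic_int_altdef_ipoly by blast
  have ex: "\<exists>i. coeff p i \<noteq> 0" using p(2) by (metis zero_neq_one)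
  define i where "i = (LEAST i. coeff p i \<noteq> 0)"
  have ci: "coeff p i \<noteq> 0" unfolding i_def using LeastI_ex[OF ex] .
  have below: "coeff p j = 0" if "j < i" for j
    using not_less_Least[of j "\<lambda>i. coeff p i \<noteq> 0"] that unfolding i_def by blast
  define m where "m = degree p"
  have im: "i \<le> m" using ci le_degree unfolding m_def by blast
  define r where "r = - (\<Sum>j\<in>{Suc i..m}. of_int (coeff p j) * a ^ (j - Suc i))"
  have "0 = (\<Sum>j\<le>m. of_int (coeff p j) * a ^ j)"
    using p(1) unfolding m_def by (simp add: poly_altdef degree_map_poly coeff_map_poly)
  also have "\<dots> = (\<Sum>j\<in>{i..m}. of_int (coeff p j) * a ^ j)"
    by (rule sum.mono_neutral_right) (auto simp: below)
  also have "\<dots> = a ^ i * (\<Sum>j\<in>{i..m}. of_int (coeff p j) * a ^ (j - i))"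
    unfolding sum_distrib_left by (intro sum.cong refl) (simp add: power_add[symmetric])
  also have "(\<Sum>j\<in>{i..m}. of_int (coeff p j) * a ^ (j - i)) = of_int (coeff p i) - a * r"
  proof -
    have "(\<Sum>j\<in>{Suc i..m}. of_int (coeff p j) * a ^ (j - i))
        = (\<Sum>j\<in>{Suc i..m}. a * (of_int (coeff p j) * a ^ (j - Suc i)))"
      by (intro sum.cong refl) (simp add: Suc_diff_Suc[symmetric] del: Suc_diff_Suc)
    moreover have "{i..m} = insert i {Suc i..m}" using im by auto
    ultimately show ?thesis unfolding r_def by (simp add: sum_distrib_left)
  qed
  finally have "of_int (coeff p i) = a * r" using a(2) by simp
  moreover have "r \<in> \<O>" unfolding r_def by (intro O_uminus O_sum O_mult O_of_int O_power a(1))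
  ultimately show ?thesis using ci that by blast
qed

lemma prime_divisor_in_prime_ideal:
  assumes P: "is_prime_ideal \<O> P" and c: "c \<noteq> 0" "of_int c \<in> P"
  shows "\<exists>p::int. prime p \<and> p dvd c \<and> of_int p \<in> P"
  using c
proof (induction "nat \<bar>c\<bar>" arbitrary: c rule: less_induct)
  case less
  show ?case
  proof (cases "\<bar>c\<bar> = 1")
    case True
    hence "1 \<in> P"
      using less.prems ideal_uminus[OF prime_ideal_is_ideal[OF P], of "of_int c"] by (auto simp: abs_if split: if_splits)
    thus ?thesis using prime_ideal_one_notin[OF P] by blast
  next
    case False
    then obtain q e where q: "prime q" "c = q * e" using prime_factor_int by (metis dvdE)
    hence "of_int q \<in> P \<or> of_int e \<in> P"
      using prime_ideal_mult[OF P O_of_int O_of_int] less.prems by simp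
    moreover have "of_int e \<in> P \<Longrightarrow> ?thesis"
    proof -
      assume "of_int e \<in> P"
      moreover have "e \<noteq> 0" "nat \<bar>e\<bar> < nat \<bar>c\<bar>"
        using q less.prems prime_gt_1_int[OF q(1)] by (auto simp: abs_mult)
      ultimately show ?thesis using less.hyps q(2) by (metis dvd_mult)
    qed
    moreover have "q dvd c" using q(2) by simp
    ultimately show ?thesis using q(1) by blast
  qed
qed

lemma place_contains_prime:
  assumes P: "P \<in> finite_places F"
  obtains p :: int where "prime p" "of_int p \<in> P"
proof -
  have "P \<noteq> {0}" using P unfolding finite_places_def by blast
  then obtain a where a: "a \<in> P" "a \<noteq> 0" using ideal_zero[OF place_ideal[OF P]] by blast
  then obtain c r where "c \<noteq> 0" "r \<in> \<O>" "of_int c = a * r"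
    using nonzero_int_multiple ideal_subset[OF place_ideal[OF P]] by blast
  hence "of_int c \<in> P" using ideal_mult_right[OF place_ideal[OF P]] a(1) by simp
  thus ?thesis using prime_divisor_in_prime_ideal[OF place_prime[OF P] \<open>c \<noteq> 0\<close>] that by blast
qed

lemma of_int_notin_prime_ideal:
  assumes P: "is_prime_ideal \<O> P" and p: "prime p" "of_int p \<in> P" and k: "\<not> p dvd k"
  shows "of_int k \<notin> P"
proof
  assume "of_int k \<in> P"
  obtain u v where "u * k + v * p = 1"
    using bezout_int[of k p] prime_imp_coprime[OF p(1) k] by (auto simp: coprime_iff_gcd_eq_1 gcd.commute)
  moreover have "of_int u * of_int k + of_int v * of_int p \<in> P"
    using P p(2) \<open>of_int k \<in> P\<close> by (intro ideal_add ideal_of_int_mult prime_ideal_is_ideal)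
  ultimately show False using prime_ideal_one_notin[OF P] by (metis of_int_add of_int_mult of_int_1)
qed

lemma residue_class_eq_iff:
  assumes I: "is_ideal \<O> P"
  shows "residue_class P a = residue_class P b \<longleftrightarrow> a - b \<in> P"
proof
  assume "residue_class P a = residue_class P b"
  moreover have "a \<in> residue_class P a" unfolding residue_class_def using ideal_zero[OF I] by force
  ultimately obtain p where "p \<in> P" "a = b + p" unfolding residue_class_def by auto
  thus "a - b \<in> P" by simp
next
  assume ab: "a - b \<in> P"
  have "residue_class P a \<subseteq> residue_class P b" if "a - b \<in> P" for a b
    using ideal_add[OF I that] unfolding residue_class_def by (force simp: algebra_simps)
  thus "residue_class P a = residue_class P b"
    using ab ideal_uminus[OF I ab] by (metis minus_diff_eq subset_antisym)
qed

lemma indep_mod_length_le: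
  assumes I: "is_ideal \<O> P" and p: "prime p" and y: "\<And>i. i < k \<Longrightarrow> y i \<in> \<O>"
    and indep: "indep_mod P p y k"
  shows "k \<le> D"
proof (rule ccontr)
  assume "\<not> k \<le> D"
  hence kD: "D < k" by simp
  have "y i \<in> F" if "i \<le> D" for i using y kD O_subset_F that by simp
  then obtain c where c: "(\<Sum>i\<le>D. of_int (c i) * y i) = 0" "\<exists>i\<le>D. \<not> p dvd c i"
    using int_linear_dependence_mod[of y p] prime_ge_2_int[OF p] by blast
  define c' where "c' i = (if i \<le> D then c i else 0)" for i
  have "(\<Sum>i<k. of_int (c' i) * y i) = (\<Sum>i\<le>D. of_int (c i) * y i)"
    by (rule sum.mono_neutral_cong_right) (use kD in \<open>auto simp: c'_def\<close>)
  hence "(\<Sum>i<k. of_int (c' i) * y i) \<in> P" using c(1) ideal_zero[OF I] by simp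
  hence dvd: "p dvd c' i" if "i < k" for i using indep that unfolding indep_mod_def by blast
  obtain i where i: "i \<le> D" "\<not> p dvd c i" using c(2) by blast
  have "p dvd c' i" using dvd kD i(1) by simp
  thus False using i unfolding c'_def by simp
qed

lemma residue_reduce_coefficients:
  assumes I: "is_ideal \<O> P" and p: "of_int p \<in> P" and y: "\<And>i. i < k \<Longrightarrow> y i \<in> \<O>"
    and a: "a - (\<Sum>i<k. of_int (e i) * y i) \<in> P"
  shows "a - (\<Sum>i<k. of_int (e i mod p) * y i) \<in> P"
proof -
  have "(\<Sum>i<k. of_int (e i - e i mod p) * y i) \<in> P"
    using y by (intro ideal_sum[OF I] ideal_of_int_multiple[OF I p]) (auto simp: dvd_minus_mod)
  from ideal_add[OF I a this] show ?thesis
    by (simp add: sum_subtractf left_diff_distrib)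
qed

text \<open>Modulo a maximal independent family, \<open>c\<^sub>k z \<equiv> -\<Sum> c\<^sub>i y\<^sub>i\<close> with \<open>c\<^sub>k\<close> a unit mod \<open>p\<close>.\<close>
lemma residue_in_span_of_maximal_indep:
  assumes I: "is_ideal \<O> P" and p: "prime p" "of_int p \<in> P"
    and y: "\<And>i. i < k \<Longrightarrow> y i \<in> \<O>" "indep_mod P p y k"
    and maximal: "\<not> indep_mod P p (y(k := z)) (Suc k)" and z: "z \<in> \<O>"
  shows "\<exists>e. z - (\<Sum>i<k. of_int (e i) * y i) \<in> P"
proof -
  obtain c where c: "(\<Sum>i<k. of_int (c i) * y i) + of_int (c k) * z \<in> P" "\<exists>i<Suc k. \<not> p dvd c i"
    using maximal unfolding indep_mod_def by (auto simp: lessThan_Suc add.commute)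
  have "\<not> p dvd c k"
  proof
    assume "p dvd c k"
    hence "(\<Sum>i<k. of_int (c i) * y i) \<in> P"
      using ideal_diff[OF I c(1) ideal_of_int_multiple[OF I p(2) \<open>p dvd c k\<close> z]] by simp
    thus False using y(2) c(2) \<open>p dvd c k\<close> unfolding indep_mod_def by (auto simp: less_Suc_eq)
  qed
  then obtain u v where uv: "u * c k + v * p = 1"
    using bezout_int[of "c k" p] prime_imp_coprime[OF p(1)]
    by (metis coprime_iff_gcd_eq_1 gcd.commute)
  define S where "S = (\<Sum>i<k. of_int (c i) * y i)"
  have "z - (\<Sum>i<k. of_int (- u * c i) * y i) = of_int u * (S + of_int (c k) * z) + of_int (v * p) * z"
  proof -
    have sum: "(\<Sum>i<k. of_int (- u * c i) * y i) = - (of_int u * S)"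
      unfolding S_def by (simp add: sum_distrib_left sum_negf mult.assoc)
    have "of_int (v * p) = (1 - of_int u * of_int (c k) :: complex)"
      using arg_cong[OF uv, of "of_int :: int \<Rightarrow> complex"] by (simp add: eq_diff_eq add.commute)
    hence vp: "of_int (v * p) * z = z - of_int u * (of_int (c k) * z)"
      by (simp add: left_diff_distrib mult.assoc)
    show ?thesis unfolding sum vp by (simp add: algebra_simps)
  qed
  also have "\<dots> \<in> P"
  proof (rule ideal_add[OF I])
    show "of_int u * (S + of_int (c k) * z) \<in> P" using ideal_of_int_mult[OF I c(1)] unfolding S_def .
    show "of_int (v * p) * z \<in> P" by (rule ideal_of_int_multiple[OF I p(2) _ z]) simp
  qed
  finally show ?thesis by (rule exI[where x = "\<lambda>i. - u * c i"])
qed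

lemma finite_residue_classes:
  assumes P: "is_prime_ideal \<O> P" and p: "prime p" "of_int p \<in> P"
  shows "finite (residue_class P ` \<O>)"
proof -
  have I: "is_ideal \<O> P" using prime_ideal_is_ideal[OF P] .
  define K where "K = {k. \<exists>y. (\<forall>i<k. y i \<in> \<O>) \<and> indep_mod P p y k}"
  have "0 \<in> K" unfolding K_def indep_mod_def by auto
  moreover have "K \<subseteq> {..D}" unfolding K_def using indep_mod_length_le[OF I p(1)] by auto
  ultimately have finK: "finite K" "K \<noteq> {}" by (auto intro: finite_subset)
  define k where "k = Max K"
  have "k \<in> K" unfolding k_def using Max_in[OF finK] .
  have maximal: "Suc k \<notin> K"
  proof
    assume "Suc k \<in> K"
    hence "Suc k \<le> k" unfolding k_def using Max_ge[OF finK(1)] by blast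
    thus False by simp
  qed
  obtain y where y: "\<And>i. i < k \<Longrightarrow> y i \<in> \<O>" "indep_mod P p y k"
    using \<open>k \<in> K\<close> unfolding K_def by blast
  have "residue_class P ` \<O> \<subseteq> (\<lambda>d. residue_class P (\<Sum>i<k. of_int (d i) * y i)) ` (PiE {..<k} (\<lambda>_. {0..<p}))"
  proof
    fix C assume "C \<in> residue_class P ` \<O>"
    then obtain z where z: "z \<in> \<O>" "C = residue_class P z" by blast
    have "\<forall>i<Suc k. (y(k := z)) i \<in> \<O>" using y(1) z(1) by auto
    hence "\<not> indep_mod P p (y(k := z)) (Suc k)" using maximal unfolding K_def by blast
    then obtain e where "z - (\<Sum>i<k. of_int (e i) * y i) \<in> P"
      using residue_in_span_of_maximal_indep[OF I p y _ z(1)] by blast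
    from residue_reduce_coefficients[OF I p(2) y(1) this]
    have "C = residue_class P (\<Sum>i<k. of_int (restrict (\<lambda>i. e i mod p) {..<k} i) * y i)"
      using z(2) residue_class_eq_iff[OF I] by simp
    moreover have "restrict (\<lambda>i. e i mod p) {..<k} \<in> PiE {..<k} (\<lambda>_. {0..<p})"
      using prime_gt_0_int[OF p(1)] by auto
    ultimately show "C \<in> (\<lambda>d. residue_class P (\<Sum>i<k. of_int (d i) * y i)) ` (PiE {..<k} (\<lambda>_. {0..<p}))"
      by blast
  qed
  thus ?thesis by (rule finite_subset) (auto intro!: finite_imageI finite_PiE)
qed

lemma card_residue_classes_ge:
  assumes P: "is_prime_ideal \<O> P" and p: "prime p" "of_int p \<in> P"
  shows "card (residue_class P ` \<O>) \<ge> nat p"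
proof -
  have inj: "inj_on (\<lambda>i. residue_class P (of_int i)) {0..<p}"
  proof (rule inj_onI)
    fix i j assume ij: "i \<in> {0..<p}" "j \<in> {0..<p}" "residue_class P (of_int i) = residue_class P (of_int j)"
    hence "p dvd (i - j)"
      using residue_class_eq_iff[OF prime_ideal_is_ideal[OF P]] of_int_notin_prime_ideal[OF P p] by fastforce
    show "i = j"
    proof (rule ccontr)
      assume "i \<noteq> j"
      hence "\<bar>p\<bar> \<le> \<bar>i - j\<bar>" using dvd_imp_le_int \<open>p dvd (i - j)\<close> by simp
      thus False using ij(1,2) by auto
    qed
  qed
  have "(\<lambda>i. residue_class P (of_int i)) ` {0..<p} \<subseteq> residue_class P ` \<O>" using O_of_int by blast
  from card_mono[OF finite_residue_classes[OF P p] this] show ?thesis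
    unfolding card_image[OF inj] by simp
qed

lemma q_fin_eq_card: "q_fin F P = card (residue_class P ` \<O>)"
  unfolding q_fin_def residue_class_def by simp

lemma finite_residue_field:
  assumes P: "P \<in> finite_places F"
  shows "finite (residue_class P ` \<O>)"
proof -
  obtain p where "prime p" "of_int p \<in> P" using place_contains_prime[OF P] .
  thus ?thesis using finite_residue_classes[OF place_prime[OF P]] by blast
qed

lemma place_prime_le_norm:
  assumes P: "P \<in> finite_places F"
  obtains p :: int where "prime p" "of_int p \<in> P" "nat p \<le> q_fin F P"
  using place_contains_prime[OF P] card_residue_classes_ge[OF place_prime[OF P]]
  unfolding q_fin_eq_card by blast

text \<open>Powers of \<open>x \<notin> P\<close> repeat modulo \<open>P\<close> in the finite residue ring, giving \<open>1 - x\<^sup>n \<in> P \<subseteq> Q\<close>.\<close>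
lemma place_maximal:
  assumes P: "P \<in> finite_places F" and Q: "is_prime_ideal \<O> Q" and PQ: "P \<subseteq> Q"
  shows "P = Q"
proof (rule ccontr)
  assume "P \<noteq> Q"
  then obtain x where x: "x \<in> Q" "x \<notin> P" using PQ by blast
  have IP: "is_ideal \<O> P" and IQ: "is_ideal \<O> Q" using place_ideal[OF P] prime_ideal_is_ideal[OF Q] .
  have xO: "x \<in> \<O>" using x(1) ideal_subset[OF IQ] by blast
  have "range (\<lambda>n. residue_class P (x ^ n)) \<subseteq> residue_class P ` \<O>" using O_power[OF xO] by blast
  hence "finite (range (\<lambda>n. residue_class P (x ^ n)))"
    using finite_residue_field[OF P] by (rule finite_subset)
  hence "\<not> inj (\<lambda>n. residue_class P (x ^ n))" using finite_imageD by blast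
  then obtain m0 n0 where "m0 \<noteq> n0" "residue_class P (x ^ m0) = residue_class P (x ^ n0)"
    unfolding inj_def by blast
  then obtain m n where mn: "m < n" "residue_class P (x ^ m) = residue_class P (x ^ n)"
    by (cases "m0 < n0") (auto simp: not_less_iff_gr_or_eq)
  have "x ^ n = x ^ m * x ^ (n - m)" using mn(1) by (simp add: power_add[symmetric])
  hence "x ^ m * (1 - x ^ (n - m)) = x ^ m - x ^ n" by (simp add: right_diff_distrib)
  also have "\<dots> \<in> P" using mn(2) residue_class_eq_iff[OF IP] by blast
  finally have "1 - x ^ (n - m) \<in> P"
    using prime_ideal_mult[OF place_prime[OF P] O_power[OF xO] O_diff[OF O_one O_power[OF xO]]]
      prime_ideal_power_notin[OF place_prime[OF P] xO x(2)] by blast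
  hence "1 - x ^ (n - m) + x ^ (n - m) \<in> Q"
    using PQ ideal_power[OF IQ x(1)] mn(1) by (intro ideal_add[OF IQ]) auto
  thus False using prime_ideal_one_notin[OF Q] by simp
qed

text \<open>Multiplication by \<open>u \<notin> P\<close> permutes the finite residue ring.\<close>
lemma place_unit_mod:
  assumes P: "P \<in> finite_places F" and u: "u \<in> \<O>" "u \<notin> P"
  obtains w where "w \<in> \<O>" "u * w - 1 \<in> P"
proof -
  have I: "is_ideal \<O> P" using place_ideal[OF P] .
  define rep where "rep C = (SOME c. c \<in> \<O> \<and> residue_class P c = C)" for C
  have rep: "rep C \<in> \<O>" "residue_class P (rep C) = C" if "C \<in> residue_class P ` \<O>" for C
  proof -
    have "\<exists>c. c \<in> \<O> \<and> residue_class P c = C" using that by blast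
    from someI_ex[OF this] show "rep C \<in> \<O>" "residue_class P (rep C) = C" unfolding rep_def by blast+
  qed
  define h where "h C = residue_class P (u * rep C)" for C
  have "h ` (residue_class P ` \<O>) \<subseteq> residue_class P ` \<O>"
  proof
    fix C' assume "C' \<in> h ` (residue_class P ` \<O>)"
    then obtain C where "C \<in> residue_class P ` \<O>" "C' = residue_class P (u * rep C)" unfolding h_def by blast
    thus "C' \<in> residue_class P ` \<O>" using O_mult[OF u(1) rep(1)] by blast
  qed
  moreover have "inj_on h (residue_class P ` \<O>)"
  proof (rule inj_onI)
    fix C1 C2 assume C: "C1 \<in> residue_class P ` \<O>" "C2 \<in> residue_class P ` \<O>" "h C1 = h C2"
    hence "u * rep C1 - u * rep C2 \<in> P" unfolding h_def using residue_class_eq_iff[OF I] by blast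
    hence "u * (rep C1 - rep C2) \<in> P" by (simp add: right_diff_distrib)
    hence "rep C1 - rep C2 \<in> P"
      using prime_ideal_mult[OF place_prime[OF P] u(1) O_diff[OF rep(1)[OF C(1)] rep(1)[OF C(2)]]] u(2) by blast
    hence "residue_class P (rep C1) = residue_class P (rep C2)" using residue_class_eq_iff[OF I] by blast
    thus "C1 = C2" using rep(2) C(1,2) by simp
  qed
  ultimately have "h ` (residue_class P ` \<O>) = residue_class P ` \<O>"
    by (rule endo_inj_surj[OF finite_residue_field[OF P]])
  moreover have "residue_class P 1 \<in> residue_class P ` \<O>" using O_one by blast
  ultimately obtain C where C: "C \<in> residue_class P ` \<O>" "h C = residue_class P 1" by (metis imageE)
  hence "u * rep C - 1 \<in> P" unfolding h_def using residue_class_eq_iff[OF I] by blast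
  thus ?thesis using that rep(1)[OF C(1)] by blast
qed

lemma separating_elements:
  fixes n :: nat
  assumes places: "\<And>i. i \<le> n \<Longrightarrow> Pl i \<in> finite_places F"
    and distinct: "\<And>i j. i \<le> n \<Longrightarrow> j \<le> n \<Longrightarrow> i \<noteq> j \<Longrightarrow> Pl i \<noteq> Pl j"
  obtains e where "\<And>i. i \<le> n \<Longrightarrow> e i \<in> \<O> - Pl i"
    and "\<And>i j. i \<le> n \<Longrightarrow> j \<le> n \<Longrightarrow> i \<noteq> j \<Longrightarrow> e i \<in> Pl j"
proof -
  have ex: "\<exists>x. x \<in> Pl j - Pl i" if "i \<le> n" "j \<le> n" "i \<noteq> j" for i j
    using place_maximal[OF places[OF that(2)] place_prime[OF places[OF that(1)]]] distinct[OF that] by blast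
  define sep where "sep i j = (SOME x. x \<in> Pl j - Pl i)" for i j
  have sep: "sep i j \<in> Pl j - Pl i" if "i \<le> n" "j \<le> n" "i \<noteq> j" for i j
    unfolding sep_def using someI_ex[OF ex[OF that]] .
  have sep_O: "sep i j \<in> \<O> - Pl i" if "i \<le> n" "j \<le> n" "i \<noteq> j" for i j
    using sep[OF that] ideal_subset[OF place_ideal[OF places[OF that(2)]]] by blast
  define e where "e i = (\<Prod>j\<in>{..n} - {i}. sep i j)" for i
  show ?thesis
  proof (rule that)
    fix i assume i: "i \<le> n"
    have "e i \<notin> Pl i" unfolding e_def
      by (rule prime_ideal_prod_notin[OF _ place_prime[OF places[OF i]]]) (use sep_O i in auto)
    thus "e i \<in> \<O> - Pl i" unfolding e_def using sep_O i by (auto intro!: O_prod)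
  next
    fix i j assume ij: "i \<le> n" "j \<le> n" "i \<noteq> j"
    have "e i = sep i j * (\<Prod>j'\<in>{..n} - {i} - {j}. sep i j')"
      unfolding e_def using ij by (subst prod.remove[of _ j]) auto
    moreover have "(\<Prod>j'\<in>{..n} - {i} - {j}. sep i j') \<in> \<O>" using sep_O ij(1) by (intro O_prod) auto
    ultimately show "e i \<in> Pl j" using ideal_mult_right[OF place_ideal[OF places[OF ij(2)]]] sep[OF ij] by simp
  qed
qed

text \<open>\<open>D + 1\<close> places above \<open>p\<close> would give separating elements with a relation \<open>\<Sum> c\<^sub>i e\<^sub>i = 0\<close> and
  some \<open>p \<nmid> c\<^sub>i\<^sub>0\<close>, whence \<open>c\<^sub>i\<^sub>0 e\<^sub>i\<^sub>0 \<in> P\<^sub>i\<^sub>0\<close>, which is impossible.\<close>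
lemma places_above_prime_card_le:
  assumes p: "prime p" and T: "finite T" "T \<subseteq> {P \<in> finite_places F. of_int p \<in> P}"
  shows "card T \<le> D"
proof (rule ccontr)
  assume "\<not> card T \<le> D"
  then obtain h where h: "bij_betw h {0..<card T} T" and D: "D < card T"
    using ex_bij_betw_nat_finite[OF T(1)] by auto
  have Pl: "h i \<in> finite_places F" "of_int p \<in> h i" if "i \<le> D" for i
    using h T(2) that D unfolding bij_betw_def by auto
  have "h i \<noteq> h j" if "i \<le> D" "j \<le> D" "i \<noteq> j" for i j
    using h that D unfolding bij_betw_def inj_on_def by auto
  then obtain e where e: "\<And>i. i \<le> D \<Longrightarrow> e i \<in> \<O> - h i"
    "\<And>i j. i \<le> D \<Longrightarrow> j \<le> D \<Longrightarrow> i \<noteq> j \<Longrightarrow> e i \<in> h j"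
    using separating_elements[of D h] Pl(1) by blast
  have "e i \<in> F" if "i \<le> D" for i using e(1)[OF that] O_subset_F by blast
  then obtain c i0 where c: "(\<Sum>i\<le>D. of_int (c i) * e i) = 0" and i0: "i0 \<le> D" "\<not> p dvd c i0"
    using int_linear_dependence_mod[of e p] prime_ge_2_int[OF p] by blast
  have I: "is_ideal \<O> (h i0)" using place_ideal[OF Pl(1)[OF i0(1)]] .
  have "of_int (c i0) * e i0 = - (\<Sum>i\<in>{..D} - {i0}. of_int (c i) * e i)"
    using c i0(1) by (simp add: sum.remove eq_neg_iff_add_eq_0)
  also have "\<dots> \<in> h i0"
    using e(2) i0(1) by (intro ideal_uminus[OF I] ideal_sum[OF I] ideal_of_int_mult[OF I]) auto
  finally have "of_int (c i0) \<in> h i0 \<or> e i0 \<in> h i0"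
    using prime_ideal_mult[OF place_prime[OF Pl(1)[OF i0(1)]] O_of_int] e(1)[OF i0(1)] by blast
  thus False
    using of_int_notin_prime_ideal[OF place_prime[OF Pl(1)[OF i0(1)]] p Pl(2)[OF i0(1)] i0(2)]
      e(1)[OF i0(1)] by blast
qed

lemma places_above_prime:
  assumes p: "prime p"
  shows "finite {P \<in> finite_places F. of_int p \<in> P}" "card {P \<in> finite_places F. of_int p \<in> P} \<le> D"
proof -
  show fin: "finite {P \<in> finite_places F. of_int p \<in> P}"
  proof (rule ccontr)
    assume "infinite {P \<in> finite_places F. of_int p \<in> P}"
    then obtain T where T: "finite T" "card T = Suc D" "T \<subseteq> {P \<in> finite_places F. of_int p \<in> P}"
      using infinite_arbitrarily_large by blast
    from places_above_prime_card_le[OF p T(1,3)] T(2) show False by simp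
  qed
  show "card {P \<in> finite_places F. of_int p \<in> P} \<le> D"
    using places_above_prime_card_le[OF p fin] by blast
qed

lemma finite_places_containing:
  assumes a: "a \<in> \<O>" "a \<noteq> 0"
  shows "finite {P \<in> finite_places F. a \<in> P}"
proof -
  obtain c r where c: "c \<noteq> 0" "r \<in> \<O>" "of_int c = a * r" using nonzero_int_multiple[OF a] .
  have "{P \<in> finite_places F. a \<in> P} \<subseteq> (\<Union>q\<in>{q. prime q \<and> q dvd c}. {P \<in> finite_places F. of_int q \<in> P})"
  proof
    fix P assume P: "P \<in> {P \<in> finite_places F. a \<in> P}"
    hence "of_int c \<in> P" using ideal_mult_right[OF place_ideal c(2)] c(3) by auto
    then obtain q where "prime q" "q dvd c" "of_int q \<in> P"
      using prime_divisor_in_prime_ideal[OF place_prime c(1)] P by blast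
    thus "P \<in> (\<Union>q\<in>{q. prime q \<and> q dvd c}. {P \<in> finite_places F. of_int q \<in> P})" using P by blast
  qed
  moreover have "{q. prime q \<and> q dvd c} \<subseteq> {-\<bar>c\<bar>..\<bar>c\<bar>}"
    using dvd_imp_le_int[OF c(1)] by (auto simp: abs_le_iff dest: prime_gt_0_int)
  hence "finite {q. prime q \<and> q dvd c}" by (rule finite_subset) simp
  hence "finite (\<Union>q\<in>{q. prime q \<and> q dvd c}. {P \<in> finite_places F. of_int q \<in> P})"
    using places_above_prime(1) by blast
  ultimately show ?thesis by (rule finite_subset)
qed

lemma fraction_representation:
  assumes x: "x \<in> F"
  obtains a b where "a \<in> \<O>" "b \<in> \<O>" "b \<noteq> 0" "x = a / b"
proof -
  obtain c where c: "(\<Sum>i\<le>D. of_int (c i) * x ^ i) = 0" "\<exists>i\<le>D. c i \<noteq> 0"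
    using int_linear_dependence[of "\<lambda>i. x ^ i"] F_power[OF x] by blast
  define k where "k = Max {i. i \<le> D \<and> c i \<noteq> 0}"
  have fin: "finite {i. i \<le> D \<and> c i \<noteq> 0}" by simp
  have "k \<in> {i. i \<le> D \<and> c i \<noteq> 0}" unfolding k_def using Max_in[OF fin] c(2) by blast
  hence k: "k \<le> D" "c k \<noteq> 0" by auto
  have above: "c j = 0" if "k < j" "j \<le> D" for j
    using Max_ge[OF fin, of j] that unfolding k_def by (metis (mono_tags) mem_Collect_eq not_le)
  have "(\<Sum>i\<le>k. of_int (c i) * x ^ i) = 0"
    using c(1) k(1) above by (simp add: sum.mono_neutral_right[of "{..D}" "{..k}"])
  hence "algebraic_int (of_int (c k) * x)" using k(2) by (rule algebraic_int_leading_coeff_times_root)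
  hence "of_int (c k) * x \<in> \<O>" using integers_iff F_mult[OF F_of_int x] by blast
  thus ?thesis using that[of "of_int (c k) * x" "of_int (c k)"] O_of_int k(2) by simp
qed

lemma ideal_pow_Suc_iff:
  "s \<in> ideal_pow \<O> P (Suc k) \<longleftrightarrow>
     (\<exists>xs. s = sum_list (map (\<lambda>(a, b). a * b) xs) \<and> set xs \<subseteq> P \<times> ideal_pow \<O> P k)"
  by simp

lemma ideal_pow_add:
  assumes "s \<in> ideal_pow \<O> P k" "t \<in> ideal_pow \<O> P k"
  shows "s + t \<in> ideal_pow \<O> P k"
proof (cases k)
  case 0
  thus ?thesis using assms O_add by simp
next
  case (Suc k')
  obtain xs ys where "s = sum_list (map (\<lambda>(a, b). a * b) xs)" "set xs \<subseteq> P \<times> ideal_pow \<O> P k'"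
    "t = sum_list (map (\<lambda>(a, b). a * b) ys)" "set ys \<subseteq> P \<times> ideal_pow \<O> P k'"
    using assms unfolding Suc ideal_pow_Suc_iff by blast
  hence "s + t = sum_list (map (\<lambda>(a, b). a * b) (xs @ ys))" "set (xs @ ys) \<subseteq> P \<times> ideal_pow \<O> P k'"
    by auto
  thus ?thesis unfolding Suc ideal_pow_Suc_iff by blast
qed

lemma ideal_pow_mult:
  assumes I: "is_ideal \<O> P" and r: "r \<in> \<O>" and s: "s \<in> ideal_pow \<O> P k"
  shows "r * s \<in> ideal_pow \<O> P k"
proof (cases k)
  case 0
  thus ?thesis using r s O_mult by simp
next
  case (Suc k')
  obtain xs where xs: "s = sum_list (map (\<lambda>(a, b). a * b) xs)" "set xs \<subseteq> P \<times> ideal_pow \<O> P k'"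
    using s unfolding Suc ideal_pow_Suc_iff by blast
  define ys where "ys = map (\<lambda>(a, b). (r * a, b)) xs"
  have "r * s = sum_list (map (\<lambda>(a, b). a * b) ys)"
    unfolding xs(1) ys_def by (induction xs) (auto simp: algebra_simps)
  moreover have "set ys \<subseteq> P \<times> ideal_pow \<O> P k'"
    using xs(2) ideal_mult_left[OF I r] unfolding ys_def by auto
  ultimately show ?thesis unfolding Suc ideal_pow_Suc_iff by blast
qed

lemma power_in_ideal_pow: "\<pi> \<in> P \<Longrightarrow> \<pi> ^ k \<in> ideal_pow \<O> P k"
proof (induction k)
  case (Suc k)
  have "\<pi> ^ Suc k = sum_list (map (\<lambda>(a, b). a * b) [(\<pi>, \<pi> ^ k)])" by simp
  thus ?case using Suc unfolding ideal_pow_Suc_iff by fastforce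
qed (simp add: O_one)

text \<open>With \<open>u w = 1 + \<pi>\<close>, \<open>\<pi> \<in> P\<close>, the element \<open>w \<Sum>\<^sub>i<\<^sub>k (-\<pi>)\<^sup>i\<close> inverts \<open>u\<close> modulo \<open>P\<^sup>k\<close>.\<close>
lemma ideal_pow_cancel:
  assumes P: "P \<in> finite_places F" and u: "u \<in> \<O>" "u \<notin> P" and z: "z \<in> \<O>"
    and uz: "u * z \<in> ideal_pow \<O> P k"
  shows "z \<in> ideal_pow \<O> P k"
proof -
  have I: "is_ideal \<O> P" using place_ideal[OF P] .
  obtain w where w: "w \<in> \<O>" "u * w - 1 \<in> P" using place_unit_mod[OF P u] .
  define \<pi> where "\<pi> = u * w - 1"
  define w' where "w' = w * (\<Sum>i<k. (- \<pi>) ^ i)"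
  have \<pi>: "- \<pi> \<in> P" "\<pi> \<in> \<O>" using w(2) ideal_uminus[OF I w(2)] ideal_subset[OF I] unfolding \<pi>_def by auto
  have "u * w' = 1 - (- \<pi>) ^ k"
    using one_diff_power_eq[of "- \<pi>" k] unfolding w'_def \<pi>_def by (simp add: mult.assoc)
  hence "(u * w' + (- \<pi>) ^ k) * z = z" by simp
  hence "z = w' * (u * z) + z * (- \<pi>) ^ k" by (simp add: algebra_simps)
  moreover have "w' \<in> \<O>" unfolding w'_def using \<pi>(2) by (intro O_mult w(1) O_sum O_power O_uminus)
  ultimately show ?thesis
    using ideal_pow_mult[OF I _ uz] ideal_pow_mult[OF I z power_in_ideal_pow[OF \<pi>(1)]] ideal_pow_add
    by metis
qed

lemma ord_v_eq_0:
  assumes P: "P \<in> finite_places F" and ab: "a \<in> \<O> - P" "b \<in> \<O> - P" "b \<noteq> 0"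
  shows "ord_v F P (a / b) = 0"
proof -
  have a0: "a \<noteq> 0" using ab(1) ideal_zero[OF place_ideal[OF P]] by blast
  define rep where "rep k \<longleftrightarrow> (\<exists>a'\<in>\<O> - {0}. \<exists>b'\<in>\<O> - {0}. a / b = a' / b' \<and> k = int (ord_int F P a') - int (ord_int F P b'))" for k
  have "rep (int (ord_int F P a) - int (ord_int F P b))" unfolding rep_def using ab a0 by blast
  hence "rep (ord_v F P (a / b))" unfolding ord_v_def rep_def[symmetric] by (rule someI)
  then obtain a' b' where a': "a' \<in> \<O>" and b': "b' \<in> \<O>" "b' \<noteq> 0" and x': "a / b = a' / b'"
    and k: "ord_v F P (a / b) = int (ord_int F P a') - int (ord_int F P b')"
    unfolding rep_def by blast
  have cross: "b * a' = a * b'" using x' ab(3) b'(2) by (simp add: field_simps)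
  have "a' \<in> ideal_pow \<O> P k \<longleftrightarrow> b' \<in> ideal_pow \<O> P k" for k
  proof
    assume "a' \<in> ideal_pow \<O> P k"
    hence "a * b' \<in> ideal_pow \<O> P k" using ideal_pow_mult[OF place_ideal[OF P]] ab(2) cross by force
    thus "b' \<in> ideal_pow \<O> P k" using ideal_pow_cancel[OF P _ _ b'(1)] ab(1) by blast
  next
    assume "b' \<in> ideal_pow \<O> P k"
    hence "b * a' \<in> ideal_pow \<O> P k" using ideal_pow_mult[OF place_ideal[OF P]] ab(1) cross by force
    thus "a' \<in> ideal_pow \<O> P k" using ideal_pow_cancel[OF P _ _ a'] ab(2) by blast
  qed
  hence "ord_int F P a' = ord_int F P b'" unfolding ord_int_def by simp
  thus ?thesis using k by simp
qed

lemma ord_v_finite_support: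
  assumes x: "x \<in> F" "x \<noteq> 0"
  shows "finite {P \<in> finite_places F. ord_v F P x \<noteq> 0}"
proof -
  obtain a b where ab: "a \<in> \<O>" "b \<in> \<O>" "b \<noteq> 0" "x = a / b" using fraction_representation[OF x(1)] .
  have "a \<noteq> 0" using ab x(2) by auto
  have "{P \<in> finite_places F. ord_v F P x \<noteq> 0} \<subseteq> {P \<in> finite_places F. a \<in> P} \<union> {P \<in> finite_places F. b \<in> P}"
    using ord_v_eq_0 ab by blast
  thus ?thesis using finite_places_containing[OF ab(1) \<open>a \<noteq> 0\<close>] finite_places_containing[OF ab(2,3)]
    by (simp add: finite_subset)
qed

end

section \<open>Coordinates in a simplicial fan\<close>

definition cone_coords ::
  "nat \<Rightarrow> ('r \<Rightarrow> nat \<Rightarrow> int) \<Rightarrow> 'r set set \<Rightarrow> (nat \<Rightarrow> real) \<Rightarrow> ('r \<Rightarrow> real) \<Rightarrow> 'r set \<Rightarrow> bool" where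
  "cone_coords d b Fan y a \<sigma> \<longleftrightarrow> \<sigma> \<in> Fan \<and> (\<forall>\<rho>. \<rho> \<notin> \<sigma> \<longrightarrow> a \<rho> = 0) \<and> (\<forall>\<rho>\<in>\<sigma>. a \<rho> \<ge> 0) \<and>
       (\<forall>j<d. y j = (\<Sum>\<rho>\<in>\<sigma>. a \<rho> * real_of_int (b \<rho> j)))"

locale stacky_fan_setting =
  fixes d l :: nat and n :: "nat \<Rightarrow> nat" and Rays :: "'r set" and b :: "'r \<Rightarrow> nat \<Rightarrow> int"
    and Fan :: "'r set set"
  assumes stacky_fan: "simplicial_stacky_fan d l n Rays b Fan"
begin

abbreviation "coords y \<equiv> (\<lambda>\<rho>. coord d b Fan \<rho> y)"

lemma n_pos: "i < l \<Longrightarrow> n i > 0"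
  using stacky_fan unfolding simplicial_stacky_fan_def by (elim conjE) simp
lemma finite_Rays: "finite Rays"
  using stacky_fan unfolding simplicial_stacky_fan_def by (elim conjE) simp
lemma ray_vanishes_above: "\<rho> \<in> Rays \<Longrightarrow> j \<ge> d \<Longrightarrow> b \<rho> j = 0"
  using stacky_fan unfolding simplicial_stacky_fan_def by (elim conjE) simp
lemma cone_subset: "\<sigma> \<in> Fan \<Longrightarrow> \<sigma> \<subseteq> Rays"
  using stacky_fan unfolding simplicial_stacky_fan_def by (elim conjE) simp
lemma face_in_fan: "\<sigma> \<in> Fan \<Longrightarrow> \<tau> \<subseteq> \<sigma> \<Longrightarrow> \<tau> \<in> Fan"
  using stacky_fan unfolding simplicial_stacky_fan_def by (elim conjE) simp
lemma cone_rays_independent: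
  "\<sigma> \<in> Fan \<Longrightarrow> (\<forall>j<d. (\<Sum>\<rho>\<in>\<sigma>. c \<rho> * real_of_int (b \<rho> j)) = 0) \<Longrightarrow> \<rho> \<in> \<sigma> \<Longrightarrow> c \<rho> = 0"
  using stacky_fan unfolding simplicial_stacky_fan_def by (elim conjE) simp
lemma cone_span_inter:
  "\<sigma> \<in> Fan \<Longrightarrow> \<tau> \<in> Fan \<Longrightarrow> cone_span d b \<sigma> \<inter> cone_span d b \<tau> = cone_span d b (\<sigma> \<inter> \<tau>)"
  using stacky_fan unfolding simplicial_stacky_fan_def by (elim conjE) simp
lemma fan_complete: "\<exists>\<sigma>\<in>Fan. y \<in> cone_span d b \<sigma>"
  using stacky_fan unfolding simplicial_stacky_fan_def by (elim conjE) simp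

lemma cone_coords_exist: "\<exists>a \<sigma>. cone_coords d b Fan y a \<sigma>"
proof -
  obtain \<sigma> a where \<sigma>: "\<sigma> \<in> Fan" "\<forall>\<rho>\<in>\<sigma>. a \<rho> \<ge> 0" "\<forall>j<d. y j = (\<Sum>\<rho>\<in>\<sigma>. a \<rho> * real_of_int (b \<rho> j))"
    using fan_complete[of y] unfolding cone_span_def by blast
  have "cone_coords d b Fan y (\<lambda>\<rho>. if \<rho> \<in> \<sigma> then a \<rho> else 0) \<sigma>"
    using \<sigma> unfolding cone_coords_def by auto
  thus ?thesis by blast
qed

lemma cone_coords_face:
  assumes r: "cone_coords d b Fan y a \<sigma>" and \<tau>: "\<tau> \<subseteq> \<sigma>"
    and c: "\<forall>j<d. y j = (\<Sum>\<rho>\<in>\<tau>. c \<rho> * real_of_int (b \<rho> j))"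
  shows "a = (\<lambda>\<rho>. if \<rho> \<in> \<tau> then c \<rho> else 0)"
proof
  fix \<rho>
  define c' where "c' \<rho> = (if \<rho> \<in> \<tau> then c \<rho> else 0)" for \<rho>
  have \<sigma>: "\<sigma> \<in> Fan" using r unfolding cone_coords_def by blast
  have fin: "finite \<sigma>" using cone_subset[OF \<sigma>] finite_Rays finite_subset by blast
  have "(\<Sum>\<rho>\<in>\<sigma>. (a \<rho> - c' \<rho>) * real_of_int (b \<rho> j)) = 0" if j: "j < d" for j
  proof -
    have "(\<Sum>\<rho>\<in>\<sigma>. c' \<rho> * real_of_int (b \<rho> j)) = (\<Sum>\<rho>\<in>\<tau>. c \<rho> * real_of_int (b \<rho> j))"
      by (rule sum.mono_neutral_cong_right[OF fin \<tau>]) (auto simp: c'_def)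
    thus ?thesis using r c j unfolding cone_coords_def by (simp add: left_diff_distrib sum_subtractf)
  qed
  hence "\<rho> \<in> \<sigma> \<Longrightarrow> a \<rho> = c' \<rho>" using cone_rays_independent[OF \<sigma>, of "\<lambda>\<rho>. a \<rho> - c' \<rho>"] by auto
  moreover have "\<rho> \<notin> \<sigma> \<Longrightarrow> a \<rho> = c' \<rho>" using r \<tau> unfolding cone_coords_def c'_def by auto
  ultimately show "a \<rho> = c' \<rho>" by blast
qed

text \<open>Both representations live on the common face \<open>\<sigma> \<inter> \<sigma>'\<close>, where the rays are independent.\<close>
lemma cone_coords_unique:
  assumes r: "cone_coords d b Fan y a \<sigma>" and r': "cone_coords d b Fan y a' \<sigma>'"
  shows "a = a'"
proof -
  have \<sigma>: "\<sigma> \<in> Fan" "\<sigma>' \<in> Fan" using r r' unfolding cone_coords_def by blast+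
  have "y \<in> cone_span d b \<sigma>" "y \<in> cone_span d b \<sigma>'"
    using r r' unfolding cone_coords_def cone_span_def by blast+
  hence "y \<in> cone_span d b (\<sigma> \<inter> \<sigma>')" using cone_span_inter[OF \<sigma>] by blast
  then obtain c where c: "\<forall>j<d. y j = (\<Sum>\<rho>\<in>\<sigma> \<inter> \<sigma>'. c \<rho> * real_of_int (b \<rho> j))"
    unfolding cone_span_def by blast
  show ?thesis using cone_coords_face[OF r _ c] cone_coords_face[OF r' _ c] by simp
qed

lemma cone_coords_coords: "\<exists>\<sigma>. cone_coords d b Fan y (coords y) \<sigma>"
proof -
  have "coords y = (SOME a. \<exists>\<sigma>. cone_coords d b Fan y a \<sigma>)"
    unfolding coord_def cone_coords_def by (simp add: Bex_def conj_assoc)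
  thus ?thesis using someI_ex[OF cone_coords_exist[of y]] by simp
qed

lemma coords_eqI: "cone_coords d b Fan y a \<sigma> \<Longrightarrow> coords y = a"
  using cone_coords_coords cone_coords_unique by blast

lemma coord_nonneg: "coord d b Fan \<rho> y \<ge> 0"
proof -
  obtain \<sigma> where "cone_coords d b Fan y (coords y) \<sigma>" using cone_coords_coords by blast
  thus ?thesis unfolding cone_coords_def by (cases "\<rho> \<in> \<sigma>") auto
qed

lemma coord_expansion: "j < d \<Longrightarrow> y j = (\<Sum>\<rho>\<in>Rays. coord d b Fan \<rho> y * real_of_int (b \<rho> j))"
proof -
  assume j: "j < d"
  obtain \<sigma> where r: "cone_coords d b Fan y (coords y) \<sigma>" using cone_coords_coords by blast
  hence \<sigma>: "\<sigma> \<in> Fan" unfolding cone_coords_def by blast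
  have "y j = (\<Sum>\<rho>\<in>\<sigma>. coord d b Fan \<rho> y * real_of_int (b \<rho> j))" using r j unfolding cone_coords_def by blast
  also have "\<dots> = (\<Sum>\<rho>\<in>Rays. coord d b Fan \<rho> y * real_of_int (b \<rho> j))"
    by (rule sum.mono_neutral_left[OF finite_Rays cone_subset[OF \<sigma>]]) (use r in \<open>auto simp: cone_coords_def\<close>)
  finally show ?thesis .
qed

lemma coord_zero: "coord d b Fan \<rho> (\<lambda>j. 0) = 0"
proof -
  obtain \<sigma> where "\<sigma> \<in> Fan" using fan_complete by blast
  hence "cone_coords d b Fan (\<lambda>j. 0) (\<lambda>\<rho>. 0) {}" using face_in_fan unfolding cone_coords_def by auto
  thus ?thesis using coords_eqI by metis
qed

lemma coord_frac:
  assumes z: "\<And>j. j < d \<Longrightarrow> z j = (\<Sum>\<rho>\<in>Rays. frac (coord d b Fan \<rho> y) * real_of_int (b \<rho> j))"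
  shows "coord d b Fan \<rho> z = frac (coord d b Fan \<rho> y)"
proof -
  obtain \<sigma> where r: "cone_coords d b Fan y (coords y) \<sigma>" using cone_coords_coords by blast
  hence \<sigma>: "\<sigma> \<in> Fan" unfolding cone_coords_def by blast
  have "z j = (\<Sum>\<rho>\<in>\<sigma>. frac (coord d b Fan \<rho> y) * real_of_int (b \<rho> j))" if "j < d" for j
    unfolding z[OF that]
    by (rule sum.mono_neutral_right[OF finite_Rays cone_subset[OF \<sigma>]]) (use r in \<open>auto simp: cone_coords_def\<close>)
  hence "cone_coords d b Fan z (\<lambda>\<rho>. frac (coord d b Fan \<rho> y)) \<sigma>"
    using r unfolding cone_coords_def by simp
  thus ?thesis using coords_eqI by metis
qed

end

section \<open>The piecewise linear function \<open>\<phi>\<^sub>t\<close>\<close>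

abbreviation zeroN :: Nelt where "zeroN \<equiv> ((\<lambda>j. 0), (\<lambda>i. 0))"
abbreviation zeroY :: Yelt where "zeroY \<equiv> ((\<lambda>j. 0), (\<lambda>i. 0))"

locale height_parameter = stacky_fan_setting d l n Rays b Fan
  for d l :: nat and n :: "nat \<Rightarrow> nat" and Rays :: "'r set" and b :: "'r \<Rightarrow> nat \<Rightarrow> int"
    and Fan :: "'r set set" +
  fixes t :: "'r + Yelt \<Rightarrow> real"
  assumes t_Lambda: "t \<in> Lambda_open d l n Rays b Fan"
begin

abbreviation "N \<equiv> Nset d l n"
abbreviation "q \<equiv> qmap d Rays b Fan"
abbreviation "\<phi> \<equiv> phi d Rays b Fan t"

text \<open>\<open>sectors\<close> is \<open>q(N) = \<pi>\<^sub>0\<^sup>* \<union> {0}\<close>, and \<open>Xi Y\<close> is the linear form \<open>\<Xi>\<^sub>Y(t)\<close>.\<close>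
definition "sectors = q ` N"
definition "b_bound = (\<Sum>\<rho>\<in>Rays. \<Sum>j<d. \<bar>b \<rho> j\<bar>)"
definition "Xi Y = t (Inr Y) + (\<Sum>\<rho>\<in>Rays. coord d b Fan \<rho> (fst Y) * t (Inl \<rho>))"
definition "t_min = Min (insert 1 ((\<lambda>\<rho>. t (Inl \<rho>)) ` Rays))"
definition "phi_min = min t_min (Min (insert 1 (Xi ` (sectors - {zeroY}))))"
definition "sector_bound = (\<Sum>Y\<in>sectors. \<bar>t (Inr Y)\<bar>)"
definition "phi_slope = t_min / (real (d + 1) * (1 + real_of_int b_bound))"

lemma t_ray_pos: "\<rho> \<in> Rays \<Longrightarrow> t (Inl \<rho>) > 0"
  using t_Lambda unfolding Lambda_open_def by blast

lemma Xi_pos: "Y \<in> sectors - {zeroY} \<Longrightarrow> Xi Y > 0"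
  using t_Lambda unfolding Lambda_open_def Xi_def pi0_star_def sectors_def by blast

lemma fst_q: "fst (q m) = (\<lambda>j. \<Sum>\<rho>\<in>Rays. frac (coord d b Fan \<rho> (rig_real (fst m))) * real_of_int (b \<rho> j))"
  and snd_q: "snd (q m) = snd m"
  unfolding qmap_def by simp_all

lemma Nset_iff:
  "m \<in> N \<longleftrightarrow> (\<forall>j\<ge>d. fst m j = 0) \<and> (\<forall>i<l. 0 \<le> snd m i \<and> snd m i < int (n i)) \<and> (\<forall>i\<ge>l. snd m i = 0)"
  unfolding Nset_def by (cases m) auto

lemma inj_on_truncation: "inj_on (\<lambda>m. (restrict (fst m) {..<d}, snd m)) N"
proof (rule inj_onI)
  fix m m' assume N: "m \<in> N" "m' \<in> N"
    and eq: "(restrict (fst m) {..<d}, snd m) = (restrict (fst m') {..<d}, snd m')"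
  have "fst m j = fst m' j" for j
  proof (cases "j < d")
    case True
    thus ?thesis using fun_cong[OF arg_cong[OF eq, of fst], of j] by simp
  next
    case False
    thus ?thesis using N unfolding Nset_iff by simp
  qed
  moreover have "snd m = snd m'" using eq by simp
  ultimately show "m = m'" by (simp add: prod_eq_iff fun_eq_iff)
qed

lemma zeroN_in_N: "zeroN \<in> N"
  unfolding Nset_def using n_pos by auto

lemma finite_torsion_parts: "finite (snd ` N)"
proof (rule finite_subset)
  show "snd ` N \<subseteq> {g. \<forall>i. (i \<in> {..<l} \<longrightarrow> g i \<in> (\<Union>i'<l. {0..<int (n i')})) \<and> (i \<notin> {..<l} \<longrightarrow> g i = 0)}"
  proof
    fix g assume "g \<in> snd ` N"
    then obtain m where "m \<in> N" "g = snd m" by blast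
    thus "g \<in> {g. \<forall>i. (i \<in> {..<l} \<longrightarrow> g i \<in> (\<Union>i'<l. {0..<int (n i')})) \<and> (i \<notin> {..<l} \<longrightarrow> g i = 0)}"
      unfolding Nset_iff by force
  qed
  show "finite \<dots>" by (rule finite_set_of_finite_funs) auto
qed

lemma abs_b_le_b_bound: "\<rho> \<in> Rays \<Longrightarrow> j < d \<Longrightarrow> \<bar>b \<rho> j\<bar> \<le> b_bound"
proof -
  assume "\<rho> \<in> Rays" "j < d"
  hence "\<bar>b \<rho> j\<bar> \<le> (\<Sum>j<d. \<bar>b \<rho> j\<bar>)" by (intro member_le_sum) auto
  also have "\<dots> \<le> b_bound" unfolding b_bound_def using \<open>\<rho> \<in> Rays\<close> finite_Rays by (intro member_le_sum) auto
  finally show ?thesis .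
qed

text \<open>The rigid part of \<open>q(m)\<close> is \<open>m\<close> minus the integral combination \<open>\<Sum> \<lfloor>a\<^sub>\<rho>\<rfloor> b\<^sub>\<rho>\<close>.\<close>
lemma fst_q_integral:
  assumes m: "m \<in> N"
  shows "fst (q m) \<in> rig_real ` {z. \<forall>j. (j \<in> {..<d} \<longrightarrow> z j \<in> {- b_bound..b_bound}) \<and> (j \<notin> {..<d} \<longrightarrow> z j = 0)}"
proof -
  define a where "a = coords (rig_real (fst m))"
  define z where "z j = (if j < d then fst m j - (\<Sum>\<rho>\<in>Rays. \<lfloor>a \<rho>\<rfloor> * b \<rho> j) else 0)" for j
  have "fst (q m) j = real_of_int (z j)" for j
  proof (cases "j < d")
    case True
    have "fst (q m) j = (\<Sum>\<rho>\<in>Rays. (a \<rho> - of_int \<lfloor>a \<rho>\<rfloor>) * real_of_int (b \<rho> j))"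
      unfolding fst_q a_def by (simp add: frac_def)
    also have "\<dots> = rig_real (fst m) j - (\<Sum>\<rho>\<in>Rays. of_int \<lfloor>a \<rho>\<rfloor> * real_of_int (b \<rho> j))"
      unfolding coord_expansion[OF True, of "rig_real (fst m)"] a_def by (simp add: left_diff_distrib sum_subtractf)
    finally show ?thesis using True unfolding z_def rig_real_def by simp
  qed (use m in \<open>simp add: fst_q ray_vanishes_above z_def\<close>)
  moreover have z_bound: "\<bar>z j\<bar> \<le> b_bound" if j: "j < d" for j
  proof -
    have "\<bar>fst (q m) j\<bar> \<le> (\<Sum>\<rho>\<in>Rays. \<bar>frac (a \<rho>) * real_of_int (b \<rho> j)\<bar>)"
      unfolding fst_q a_def by (rule sum_abs)
    also have "\<dots> \<le> (\<Sum>\<rho>\<in>Rays. real_of_int \<bar>b \<rho> j\<bar>)"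
    proof (rule sum_mono)
      fix \<rho>
      have "frac (a \<rho>) \<le> 1" using frac_lt_1[of "a \<rho>"] by simp
      thus "\<bar>frac (a \<rho>) * real_of_int (b \<rho> j)\<bar> \<le> real_of_int \<bar>b \<rho> j\<bar>"
        by (simp add: abs_mult mult_left_le_one_le)
    qed
    also have "\<dots> \<le> real_of_int b_bound"
      unfolding b_bound_def of_int_sum[symmetric] of_int_le_iff using j by (intro sum_mono member_le_sum) auto
    finally show ?thesis using \<open>fst (q m) j = real_of_int (z j)\<close> by linarith
  qed
  moreover have "fst (q m) = rig_real z" unfolding rig_real_def using \<open>\<And>j. fst (q m) j = _\<close> by (rule ext)
  moreover have "z \<in> {z. \<forall>j. (j \<in> {..<d} \<longrightarrow> z j \<in> {- b_bound..b_bound}) \<and> (j \<notin> {..<d} \<longrightarrow> z j = 0)}"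
  proof -
    have "z j \<in> {- b_bound..b_bound}" if "j < d" for j
      unfolding atLeastAtMost_iff using z_bound[OF that] by arith
    moreover have "z j = 0" if "\<not> j < d" for j using that by (simp add: z_def)
    ultimately show ?thesis by auto
  qed
  ultimately show ?thesis by blast
qed

lemma finite_sectors: "finite sectors"
proof (rule finite_subset)
  show "sectors \<subseteq> rig_real ` {z. \<forall>j. (j \<in> {..<d} \<longrightarrow> z j \<in> {- b_bound..b_bound}) \<and> (j \<notin> {..<d} \<longrightarrow> z j = 0)}
      \<times> snd ` N"
  proof
    fix Y assume "Y \<in> sectors"
    then obtain m where "m \<in> N" "Y = q m" unfolding sectors_def by blast
    thus "Y \<in> rig_real ` {z. \<forall>j. (j \<in> {..<d} \<longrightarrow> z j \<in> {- b_bound..b_bound}) \<and> (j \<notin> {..<d} \<longrightarrow> z j = 0)}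
      \<times> snd ` N"
      using fst_q_integral[of m] snd_q[of m] by (simp add: mem_Times_iff)
  qed
  show "finite \<dots>"
    by (intro finite_cartesian_product finite_imageI finite_torsion_parts finite_set_of_finite_funs) auto
qed

lemma t_min_pos: "t_min > 0"
  unfolding t_min_def using finite_Rays t_ray_pos by (subst Min_gr_iff) auto

lemma t_min_le: "\<rho> \<in> Rays \<Longrightarrow> t_min \<le> t (Inl \<rho>)"
  unfolding t_min_def using finite_Rays by (intro Min_le) auto

lemma phi_min_pos: "phi_min > 0"
proof -
  have "Min (insert 1 (Xi ` (sectors - {zeroY}))) > 0"
    using finite_sectors Xi_pos by (subst Min_gr_iff) auto
  thus ?thesis unfolding phi_min_def using t_min_pos by simp
qed

lemma phi_min_le_t: "\<rho> \<in> Rays \<Longrightarrow> phi_min \<le> t (Inl \<rho>)"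
  unfolding phi_min_def using t_min_le by fastforce

lemma phi_min_le_Xi:
  assumes "Y \<in> sectors - {zeroY}"
  shows "phi_min \<le> Xi Y"
proof -
  have "Min (insert 1 (Xi ` (sectors - {zeroY}))) \<le> Xi Y"
    using finite_sectors assms by (intro Min_le) auto
  thus ?thesis unfolding phi_min_def by simp
qed

lemma sector_bound_ge: "Y \<in> sectors \<Longrightarrow> \<bar>t (Inr Y)\<bar> \<le> sector_bound"
  unfolding sector_bound_def using finite_sectors by (intro member_le_sum) auto

lemma sector_bound_nonneg: "sector_bound \<ge> 0"
  unfolding sector_bound_def by (intro sum_nonneg) auto

lemma phi_slope_pos: "phi_slope > 0"
proof -
  have "b_bound \<ge> 0" unfolding b_bound_def by (intro sum_nonneg) auto
  thus ?thesis unfolding phi_slope_def using t_min_pos by simp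
qed

lemma phi_eq:
  "\<phi> m = (if q m \<noteq> zeroY then t (Inr (q m)) else 0) + (\<Sum>\<rho>\<in>Rays. coord d b Fan \<rho> (rig_real (fst m)) * t (Inl \<rho>))"
  unfolding phi_def by simp

lemma phi_zero: "\<phi> zeroN = 0"
proof -
  have "rig_real (\<lambda>j. 0) = (\<lambda>j. 0)" unfolding rig_real_def by simp
  hence coord0: "coord d b Fan \<rho> (rig_real (fst zeroN)) = 0" for \<rho> using coord_zero by simp
  hence "q zeroN = zeroY" unfolding qmap_def by simp
  thus ?thesis unfolding phi_eq using coord0 by simp
qed

lemma weighted_coords_ge: "(\<Sum>\<rho>\<in>Rays. coord d b Fan \<rho> y * t (Inl \<rho>)) \<ge> t_min * (\<Sum>\<rho>\<in>Rays. coord d b Fan \<rho> y)"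
  unfolding sum_distrib_left by (intro sum_mono) (simp add: mult.commute coord_nonneg t_min_le mult_right_mono)

lemma phi_ge_coord_sum:
  assumes "m \<in> N"
  shows "\<phi> m \<ge> t_min * (\<Sum>\<rho>\<in>Rays. coord d b Fan \<rho> (rig_real (fst m))) - sector_bound"
proof -
  have "(if q m \<noteq> zeroY then t (Inr (q m)) else 0) \<ge> - sector_bound"
    using sector_bound_ge[of "q m"] assms sector_bound_nonneg unfolding sectors_def by auto
  thus ?thesis unfolding phi_eq using weighted_coords_ge[of "rig_real (fst m)"] by linarith
qed

text \<open>If \<open>q(m) = 0\<close>, all coordinates of \<open>m\<close> are integers, and not all of them vanish.\<close>
lemma coord_ge_1_if_q_zero:
  assumes m: "m \<in> N" "m \<noteq> zeroN" and qm: "q m = zeroY"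
  obtains \<rho> where "\<rho> \<in> Rays" "coord d b Fan \<rho> (rig_real (fst m)) \<ge> 1"
proof -
  define a where "a = coords (rig_real (fst m))"
  have "frac (a \<rho>) = coord d b Fan \<rho> (fst (q m))" for \<rho>
    unfolding a_def by (rule coord_frac[symmetric]) (simp add: fst_q)
  hence frac0: "frac (a \<rho>) = 0" for \<rho> using qm coord_zero by simp
  have "fst m \<noteq> (\<lambda>j. 0)" using m(2) qm snd_q[of m] by (cases m) auto
  then obtain j where j: "fst m j \<noteq> 0" by auto
  have "j < d" using j m(1) unfolding Nset_iff by (meson not_less)
  hence "(\<Sum>\<rho>\<in>Rays. a \<rho> * real_of_int (b \<rho> j)) \<noteq> 0"
    using coord_expansion[of j "rig_real (fst m)"] j unfolding a_def rig_real_def by simp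
  then obtain \<rho> where \<rho>: "\<rho> \<in> Rays" "a \<rho> \<noteq> 0" by (metis (no_types, lifting) mult_eq_0_iff sum.neutral)
  obtain k where "a \<rho> = of_int k" using frac0[of \<rho>] by (metis frac_eq_0_iff Ints_cases)
  moreover have "a \<rho> \<ge> 0" unfolding a_def by (rule coord_nonneg)
  ultimately have "a \<rho> \<ge> 1" using \<rho>(2) by simp
  thus ?thesis using that \<rho>(1) unfolding a_def by blast
qed

lemma phi_ge_phi_min:
  assumes m: "m \<in> N" "m \<noteq> zeroN"
  shows "\<phi> m \<ge> phi_min"
proof (cases "q m = zeroY")
  case False
  define a where "a = coords (rig_real (fst m))"
  have "coord d b Fan \<rho> (fst (q m)) = frac (a \<rho>)" for \<rho>
    unfolding a_def by (rule coord_frac) (simp add: fst_q)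
  hence "Xi (q m) = t (Inr (q m)) + (\<Sum>\<rho>\<in>Rays. frac (a \<rho>) * t (Inl \<rho>))"
    unfolding Xi_def by simp
  also have "\<dots> \<le> \<phi> m"
    unfolding phi_eq a_def using False t_ray_pos
    by (auto intro!: sum_mono mult_right_mono simp: frac_def less_imp_le coord_nonneg)
  finally show ?thesis using phi_min_le_Xi[of "q m"] False m(1) unfolding sectors_def by fastforce
next
  case True
  obtain \<rho> where \<rho>: "\<rho> \<in> Rays" "coord d b Fan \<rho> (rig_real (fst m)) \<ge> 1"
    using coord_ge_1_if_q_zero[OF m True] .
  have "phi_min \<le> t (Inl \<rho>)" using phi_min_le_t[OF \<rho>(1)] .
  also have "\<dots> \<le> coord d b Fan \<rho> (rig_real (fst m)) * t (Inl \<rho>)"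
    using \<rho>(2) t_ray_pos[OF \<rho>(1)] by (simp add: mult_le_cancel_right1)
  also have "\<dots> \<le> (\<Sum>\<rho>\<in>Rays. coord d b Fan \<rho> (rig_real (fst m)) * t (Inl \<rho>))"
    by (rule member_le_sum[OF \<rho>(1) _ finite_Rays]) (simp add: coord_nonneg less_imp_le[OF t_ray_pos])
  also have "\<dots> = \<phi> m" unfolding phi_eq using True by simp
  finally show ?thesis .
qed

lemma phi_nonneg:
  assumes "m \<in> N"
  shows "\<phi> m \<ge> 0"
proof (cases "m = zeroN")
  case False
  thus ?thesis using phi_ge_phi_min[OF assms False] phi_min_pos by linarith
qed (simp add: phi_zero)

lemma abs_le_coord_sum:
  assumes "j < d"
  shows "\<bar>real_of_int (fst m j)\<bar> \<le> (1 + real_of_int b_bound) * (\<Sum>\<rho>\<in>Rays. coord d b Fan \<rho> (rig_real (fst m)))"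
proof -
  define y where "y = rig_real (fst m)"
  have "\<bar>real_of_int (fst m j)\<bar> = \<bar>\<Sum>\<rho>\<in>Rays. coord d b Fan \<rho> y * real_of_int (b \<rho> j)\<bar>"
    using coord_expansion[OF assms, of y] unfolding y_def rig_real_def by simp
  also have "\<dots> \<le> (\<Sum>\<rho>\<in>Rays. coord d b Fan \<rho> y * (1 + real_of_int b_bound))"
  proof (rule order.trans[OF sum_abs sum_mono])
    fix \<rho> assume "\<rho> \<in> Rays"
    hence "\<bar>real_of_int (b \<rho> j)\<bar> \<le> 1 + real_of_int b_bound" using abs_b_le_b_bound[OF _ assms] by fastforce
    thus "\<bar>coord d b Fan \<rho> y * real_of_int (b \<rho> j)\<bar> \<le> coord d b Fan \<rho> y * (1 + real_of_int b_bound)"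
      using coord_nonneg by (simp add: abs_mult mult_left_mono)
  qed
  also have "\<dots> = (1 + real_of_int b_bound) * (\<Sum>\<rho>\<in>Rays. coord d b Fan \<rho> y)"
    by (simp add: sum_distrib_left mult.commute)
  finally show ?thesis unfolding y_def .
qed

lemma phi_ge_linear:
  assumes "m \<in> N"
  shows "\<phi> m \<ge> phi_slope * (\<Sum>j<d. \<bar>real_of_int (fst m j)\<bar>) - sector_bound"
proof -
  define S where "S = (\<Sum>\<rho>\<in>Rays. coord d b Fan \<rho> (rig_real (fst m)))"
  define X where "X = real (d + 1) * (1 + real_of_int b_bound)"
  have "S \<ge> 0" unfolding S_def by (intro sum_nonneg coord_nonneg)
  have "b_bound \<ge> 0" unfolding b_bound_def by (intro sum_nonneg) auto
  hence "X > 0" unfolding X_def by simp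
  have "(\<Sum>j<d. \<bar>real_of_int (fst m j)\<bar>) \<le> (\<Sum>j<d. (1 + real_of_int b_bound) * S)"
    unfolding S_def by (intro sum_mono abs_le_coord_sum) simp
  also have "\<dots> = real d * ((1 + real_of_int b_bound) * S)" by simp
  also have "\<dots> \<le> X * S"
    unfolding X_def using \<open>S \<ge> 0\<close> \<open>b_bound \<ge> 0\<close> by (simp add: mult_right_mono)
  finally have "phi_slope * (\<Sum>j<d. \<bar>real_of_int (fst m j)\<bar>) \<le> phi_slope * (X * S)"
    using phi_slope_pos by (simp add: mult_left_mono)
  also have "\<dots> = t_min * S" unfolding phi_slope_def X_def[symmetric] using \<open>X > 0\<close> by simp
  finally have "phi_slope * (\<Sum>j<d. \<bar>real_of_int (fst m j)\<bar>) \<le> t_min * S" .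
  thus ?thesis using phi_ge_coord_sum[OF assms] unfolding S_def by linarith
qed

lemma phi_inf_nonneg: "phi_inf d Rays b Fan t y \<ge> 0"
  unfolding phi_inf_def by (intro sum_nonneg mult_nonneg_nonneg coord_nonneg less_imp_le[OF t_ray_pos])

end

section \<open>Counting by Rankin's trick\<close>

lemma sum_two_powr_neg_abs_interval:
  "(\<Sum>z\<in>{-int K..int K}. (2::real) powr (- \<bar>real_of_int z\<bar>)) \<le> 3 - 2 * 2 powr (- real K)"
proof (induction K)
  case (Suc K)
  have "{-int (Suc K)..int (Suc K)} = insert (int (Suc K)) (insert (- int (Suc K)) {-int K..int K})" by auto
  hence eq: "(\<Sum>z\<in>{-int (Suc K)..int (Suc K)}. (2::real) powr (- \<bar>real_of_int z\<bar>))
      = 2 * 2 powr (- real (Suc K)) + (\<Sum>z\<in>{-int K..int K}. (2::real) powr (- \<bar>real_of_int z\<bar>))"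
    by (simp add: algebra_simps)
  have "(2::real) powr (- real K) = 2 powr (1 + (- real (Suc K)))" by simp
  also have "\<dots> = 2 powr 1 * 2 powr (- real (Suc K))" by (rule powr_add)
  finally have "(2::real) powr (- real K) = 2 * 2 powr (- real (Suc K))" by simp
  thus ?case using Suc eq by linarith
qed simp

lemma sum_two_powr_neg_abs_le_3:
  assumes "finite Z"
  shows "(\<Sum>z\<in>Z. (2::real) powr (- \<bar>real_of_int z\<bar>)) \<le> 3"
proof -
  define K where "K = nat (Max (insert 0 (abs ` Z)))"
  have "Z \<subseteq> {-int K..int K}"
  proof
    fix z assume "z \<in> Z"
    hence "\<bar>z\<bar> \<le> Max (insert 0 (abs ` Z))" using assms by (intro Max_ge) auto
    thus "z \<in> {-int K..int K}" unfolding K_def by (auto simp: abs_le_iff)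
  qed
  hence "(\<Sum>z\<in>Z. (2::real) powr (- \<bar>real_of_int z\<bar>)) \<le> (\<Sum>z\<in>{-int K..int K}. 2 powr (- \<bar>real_of_int z\<bar>))"
    by (intro sum_mono2) auto
  also have "\<dots> \<le> 3"
    using sum_two_powr_neg_abs_interval[of K] powr_ge_zero[of 2 "- real K"] by linarith
  finally show ?thesis .
qed

lemma sum_inverse_squares_interval: "N \<ge> 1 \<Longrightarrow> (\<Sum>a\<in>{2..N}. 1 / (real a)^2) \<le> 1 - 1 / real N"
proof (induction N rule: dec_induct)
  case (step N)
  have "1 / (real (Suc N))^2 \<le> 1 / (real N * real (Suc N))"
    using step(1) by (intro divide_left_mono) (auto simp: power2_eq_square)
  also have "\<dots> = 1 / real N - 1 / real (Suc N)" using step(1) by (simp add: field_simps)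
  finally show ?case using step by (simp add: atLeastAtMostSuc_conv)
qed simp

lemma sum_inverse_squares_le_1:
  assumes "finite A" "\<And>a. a \<in> A \<Longrightarrow> a \<ge> (2::int)"
  shows "(\<Sum>a\<in>A. 1 / (real_of_int a)^2) \<le> 1"
proof -
  define N where "N = Suc (nat (Max (insert 0 A)))"
  have inj: "inj_on nat A"
  proof (rule inj_onI)
    fix x y assume "x \<in> A" "y \<in> A" "nat x = nat y"
    thus "x = y" using assms(2)[of x] assms(2)[of y] by simp
  qed
  have "nat ` A \<subseteq> {2..N}"
  proof
    fix x assume "x \<in> nat ` A"
    then obtain a where a: "a \<in> A" "x = nat a" by blast
    have "a \<le> Max (insert 0 A)" using assms(1) a(1) by simp
    thus "x \<in> {2..N}" using a assms(2)[OF a(1)] unfolding N_def by auto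
  qed
  have "(\<Sum>a\<in>A. 1 / (real_of_int a)^2) = (\<Sum>x\<in>nat ` A. 1 / (real x)^2)"
  proof (subst sum.reindex[OF inj], intro sum.cong refl)
    fix a assume "a \<in> A"
    hence "0 \<le> a" using assms(2) by force
    thus "1 / (real_of_int a)^2 = ((\<lambda>x. 1 / (real x)^2) \<circ> nat) a" by simp
  qed
  also have "\<dots> \<le> (\<Sum>x\<in>{2..N}. 1 / (real x)^2)" by (rule sum_mono2[OF _ \<open>nat ` A \<subseteq> {2..N}\<close>]) auto
  also have "\<dots> \<le> 1 - 1 / real N" by (rule sum_inverse_squares_interval) (simp add: N_def)
  also have "\<dots> \<le> 1" by simp
  finally show ?thesis .
qed

lemma prod_one_plus_le_exp_sum:
  fixes a :: "'a \<Rightarrow> real"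
  assumes "finite V" "\<And>v. v \<in> V \<Longrightarrow> a v \<ge> 0"
  shows "(\<Prod>v\<in>V. 1 + a v) \<le> exp (\<Sum>v\<in>V. a v)"
proof -
  have "(\<Prod>v\<in>V. 1 + a v) \<le> (\<Prod>v\<in>V. exp (a v))"
    using assms(2) by (intro prod_mono) (auto simp: add_nonneg_nonneg)
  thus ?thesis by (simp add: exp_sum[OF assms(1)])
qed

lemma powr_neg_le_two_powr:
  fixes x e :: real
  assumes x: "x \<ge> 2" and e: "e \<ge> 2"
  shows "x powr (- e) \<le> 4 / x^2 * 2 powr (- e)"
proof -
  have "x powr (- e) = x powr (- 2) * x powr (- (e - 2))" by (simp add: powr_add[symmetric])
  also have "x powr (- (e - 2)) \<le> 2 powr (- (e - 2))" using x e by (intro powr_mono2') auto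
  also have "(2::real) powr (- (e - 2)) = 4 * 2 powr (- e)"
  proof -
    have "(2::real) powr (- (e - 2)) = 2 powr (2 + (- e))" by (simp add: algebra_simps)
    also have "\<dots> = 2 powr 2 * 2 powr (- e)" by (rule powr_add)
    finally show ?thesis by simp
  qed
  also have "x powr (- 2) = 1 / x^2"
  proof -
    have "x powr 2 = x ^ 2" using powr_realpow[of x 2] x by simp
    thus ?thesis by (simp add: powr_minus_divide)
  qed
  finally have "x powr (- e) \<le> 1 / x^2 * (4 * 2 powr (- e))" using x by (simp add: mult_left_mono)
  thus ?thesis by (simp add: mult_ac)
qed

lemma powr_le_one_plus_power:
  fixes B s :: real
  assumes "B > 0" "s \<ge> 0"
  shows "B powr s \<le> 1 + B ^ nat \<lceil>s\<rceil>"
proof (cases "B \<le> 1")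
  case True
  hence "B powr s \<le> 1" using assms by (intro powr_le1) auto
  thus ?thesis using assms(1) by (simp add: add_increasing2)
next
  case False
  hence "B powr s \<le> B powr (real (nat \<lceil>s\<rceil>))" by (intro powr_mono) (use assms in auto)
  thus ?thesis using assms(1) by (simp add: powr_realpow)
qed

locale height_setting = number_field_setting F + height_parameter d l n Rays b Fan t
  for F :: "complex set" and d l :: nat and n :: "nat \<Rightarrow> nat" and Rays :: "'r set"
    and b :: "'r \<Rightarrow> nat \<Rightarrow> int" and Fan :: "'r set set" and t :: "'r + Yelt \<Rightarrow> real"
begin

abbreviation "Nv v \<equiv> real (q_fin F v)"
abbreviation "log_v v x \<equiv> log_fin F d l n v x"
abbreviation "H \<equiv> height F d l n Rays b Fan t"
abbreviation "T \<equiv> torus_points F d l n"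

lemma norm_ge_2:
  assumes "v \<in> finite_places F"
  shows "Nv v \<ge> 2"
proof -
  obtain p where "prime p" "nat p \<le> q_fin F v" using place_prime_le_norm[OF assms] by blast
  moreover have "2 \<le> nat p" using prime_ge_2_int[OF \<open>prime p\<close>] by simp
  ultimately show ?thesis by linarith
qed

lemma log_v_in_N: "log_v v x \<in> N"
  unfolding log_fin_def Nset_def using n_pos by (auto intro: pos_mod_sign pos_mod_bound)

lemma torus_point_components:
  assumes x: "x \<in> T"
  shows "j < d \<Longrightarrow> fst x j \<in> F - {0}" and "i < l \<Longrightarrow> (SOME u. u \<in> snd x i) \<in> F - {0}"
proof -
  obtain tt U where xe: "x = (tt, U)" by (cases x)
  have P: "\<forall>j<d. tt j \<in> F - {0}" "\<forall>i<l. \<exists>u\<in>F - {0}. U i = {u * w ^ n i | w. w \<in> F - {0}}"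
    using x unfolding xe torus_points_def by blast+
  show "j < d \<Longrightarrow> fst x j \<in> F - {0}" using P(1) xe by auto
  assume i: "i < l"
  obtain u where u: "u \<in> F - {0}" "U i = {u * w ^ n i | w. w \<in> F - {0}}" using P(2) i by blast
  have "u * 1 ^ n i \<in> U i" unfolding u(2) using F_one by (intro CollectI exI[of _ 1]) simp
  hence "(SOME z. z \<in> U i) \<in> U i" by (rule someI)
  then obtain w where w: "w \<in> F - {0}" "(SOME z. z \<in> U i) = u * w ^ n i" using u(2) by blast
  thus "(SOME u. u \<in> snd x i) \<in> F - {0}" using u(1) xe by (simp add: F_mult F_power)
qed

text \<open>The product defining \<open>height\<close> ranges over \<open>support x\<close>, so it is a genuine product (and not
  the junk value of an infinite one) only because the support is finite.\<close>
definition "support x = {v \<in> finite_places F. log_v v x \<noteq> zeroN}"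

lemma finite_support:
  assumes x: "x \<in> T"
  shows "finite (support x)"
proof -
  have sub: "support x \<subseteq> (\<Union>j<d. {v \<in> finite_places F. ord_v F v (fst x j) \<noteq> 0})
      \<union> (\<Union>i<l. {v \<in> finite_places F. ord_v F v (SOME u. u \<in> snd x i) \<noteq> 0})"
    unfolding support_def log_fin_def by (auto simp: fun_eq_iff)
  have "finite (\<Union>j<d. {v \<in> finite_places F. ord_v F v (fst x j) \<noteq> 0})"
    using ord_v_finite_support torus_point_components(1)[OF x] by auto
  moreover have "finite (\<Union>i<l. {v \<in> finite_places F. ord_v F v (SOME u. u \<in> snd x i) \<noteq> 0})"
    using ord_v_finite_support torus_point_components(2)[OF x] by auto
  ultimately show ?thesis by (intro finite_subset[OF sub] finite_UnI)
qed

definition "height_fin x = (\<Prod>v\<in>support x. Nv v powr \<phi> (log_v v x))"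
definition "height_inf x =
  (\<Prod>v\<in>infinite_places F. exp (real (local_degree v) * phi_inf d Rays b Fan t (log_inf d v x)))"

lemma height_eq: "H x = height_fin x * height_inf x"
  unfolding height_def height_fin_def height_inf_def support_def by simp

lemma local_factor_ge_1: "v \<in> finite_places F \<Longrightarrow> Nv v powr \<phi> (log_v v x) \<ge> 1"
  using norm_ge_2[of v] phi_nonneg[OF log_v_in_N] by (intro ge_one_powr_ge_zero) auto

lemma height_fin_ge_1: "height_fin x \<ge> 1"
  unfolding height_fin_def support_def by (intro prod_ge_1 local_factor_ge_1) blast

lemma height_fin_le_height: "height_fin x \<le> H x"
proof -
  have "height_inf x \<ge> 1" unfolding height_inf_def by (intro prod_ge_1) (simp add: phi_inf_nonneg)
  thus ?thesis unfolding height_eq using height_fin_ge_1[of x] by (simp add: mult_le_cancel_left1)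
qed

lemma local_factor_le_height:
  assumes x: "x \<in> T" and v: "v \<in> support x"
  shows "Nv v powr \<phi> (log_v v x) \<le> H x"
proof -
  have "(\<Prod>v\<in>{v}. Nv v powr \<phi> (log_v v x)) \<le> height_fin x" unfolding height_fin_def
    using v finite_support[OF x] local_factor_ge_1 unfolding support_def by (intro prod_mono2) auto
  thus ?thesis using height_fin_le_height[of x] by simp
qed

definition residue_prime :: "complex set \<Rightarrow> int" where
  "residue_prime v = (SOME p. prime p \<and> of_int p \<in> v \<and> nat p \<le> q_fin F v)"

lemma residue_prime:
  assumes "v \<in> finite_places F"
  shows "prime (residue_prime v)" "of_int (residue_prime v) \<in> v" "real_of_int (residue_prime v) \<le> Nv v"
proof -
  obtain p where "prime p \<and> of_int p \<in> v \<and> nat p \<le> q_fin F v" using place_prime_le_norm[OF assms] by blast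
  hence "prime (residue_prime v) \<and> of_int (residue_prime v) \<in> v \<and> nat (residue_prime v) \<le> q_fin F v"
    unfolding residue_prime_def by (rule someI)
  hence p: "prime (residue_prime v)" "of_int (residue_prime v) \<in> v" "nat (residue_prime v) \<le> q_fin F v"
    by blast+
  show "prime (residue_prime v)" "of_int (residue_prime v) \<in> v" using p(1,2) .
  have "residue_prime v \<ge> 0" using prime_ge_0_int[OF p(1)] .
  thus "real_of_int (residue_prime v) \<le> Nv v" using p(3) by linarith
qed

definition "small_places B = {v \<in> finite_places F. Nv v \<le> B powr (1 / phi_min)}"
definition "small_elements B = {m \<in> N. \<phi> m \<le> max 0 (log 2 B)}"

abbreviation "points B \<equiv> {x \<in> T. H x \<le> B}"

lemma finite_small_places: "finite (small_places B)"
proof -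
  define X where "X = \<lfloor>B powr (1 / phi_min)\<rfloor>"
  have "small_places B \<subseteq> (\<Union>p\<in>{2..X}. {v \<in> finite_places F. of_int p \<in> v \<and> prime p})"
  proof
    fix v assume v: "v \<in> small_places B"
    hence "residue_prime v \<le> X"
      using residue_prime(3)[of v] unfolding small_places_def X_def by (simp add: le_floor_iff)
    thus "v \<in> (\<Union>p\<in>{2..X}. {v \<in> finite_places F. of_int p \<in> v \<and> prime p})"
      using v residue_prime(1,2)[of v] prime_ge_2_int unfolding small_places_def by auto
  qed
  moreover have "finite {v \<in> finite_places F. of_int p \<in> v \<and> prime p}" for p
    by (cases "prime p") (simp_all add: places_above_prime(1))
  ultimately show ?thesis by (rule finite_subset[OF _ finite_UN_I[OF finite_atLeastAtMost_int]])
qed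

lemma small_elements_bounded:
  assumes "m \<in> small_elements B" "j < d"
  shows "\<bar>fst m j\<bar> \<le> int (nat \<lceil>(max 0 (log 2 B) + sector_bound) / phi_slope\<rceil>)"
proof -
  have m: "m \<in> N" "\<phi> m \<le> max 0 (log 2 B)" using assms(1) unfolding small_elements_def by auto
  have "phi_slope * \<bar>real_of_int (fst m j)\<bar> \<le> phi_slope * (\<Sum>j<d. \<bar>real_of_int (fst m j)\<bar>)"
    using assms(2) phi_slope_pos by (intro mult_left_mono member_le_sum) auto
  also have "\<dots> \<le> max 0 (log 2 B) + sector_bound" using phi_ge_linear[OF m(1)] m(2) by linarith
  finally have "\<bar>real_of_int (fst m j)\<bar> \<le> (max 0 (log 2 B) + sector_bound) / phi_slope"
    using phi_slope_pos by (simp add: field_simps)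
  thus ?thesis by linarith
qed

lemma finite_small_elements: "finite (small_elements B)"
proof -
  define K where "K = int (nat \<lceil>(max 0 (log 2 B) + sector_bound) / phi_slope\<rceil>)"
  have "small_elements B \<subseteq> {f. \<forall>j. (j \<in> {..<d} \<longrightarrow> f j \<in> {-K..K}) \<and> (j \<notin> {..<d} \<longrightarrow> f j = 0)} \<times> snd ` N"
  proof
    fix m assume m: "m \<in> small_elements B"
    hence "fst m j \<in> {-K..K}" if "j < d" for j
      using small_elements_bounded[OF m that] unfolding K_def by (simp add: abs_le_iff)
    moreover have "m \<in> N" using m unfolding small_elements_def by blast
    moreover from this have "fst m j = 0" if "\<not> j < d" for j using that unfolding Nset_iff by auto
    ultimately show "m \<in> {f. \<forall>j. (j \<in> {..<d} \<longrightarrow> f j \<in> {-K..K}) \<and> (j \<notin> {..<d} \<longrightarrow> f j = 0)} \<times> snd ` N"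
      by (auto simp: mem_Times_iff)
  qed
  thus ?thesis
    by (rule finite_subset) (intro finite_cartesian_product finite_set_of_finite_funs finite_torsion_parts; simp)
qed

text \<open>A place in the support contributes at least \<open>Nv v powr phi_min\<close> and at least
  \<open>2 powr \<phi> (log_v v x)\<close> to the height.\<close>
lemma support_small:
  assumes x: "x \<in> points B" and v: "v \<in> support x"
  shows "v \<in> small_places B" "log_v v x \<in> small_elements B"
proof -
  have vp: "v \<in> finite_places F" and ne: "log_v v x \<noteq> zeroN" using v unfolding support_def by auto
  have le_B: "Nv v powr \<phi> (log_v v x) \<le> B" using local_factor_le_height[OF _ v] x by force
  have q2: "Nv v \<ge> 2" using norm_ge_2[OF vp] .
  have "Nv v powr phi_min \<le> Nv v powr \<phi> (log_v v x)"
    using phi_ge_phi_min[OF log_v_in_N ne] q2 by (intro powr_mono) auto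
  hence "(Nv v powr phi_min) powr (1 / phi_min) \<le> B powr (1 / phi_min)"
    using le_B phi_min_pos by (intro powr_mono2) auto
  thus "v \<in> small_places B" unfolding small_places_def using vp phi_min_pos q2 by (simp add: powr_powr)
  have "2 powr \<phi> (log_v v x) \<le> Nv v powr \<phi> (log_v v x)"
    using q2 phi_nonneg[OF log_v_in_N] by (intro powr_mono2) auto
  hence "2 powr \<phi> (log_v v x) \<le> B" using le_B by linarith
  moreover from this have "B > 0" using powr_gt_zero[of 2 "\<phi> (log_v v x)"] by linarith
  ultimately have "\<phi> (log_v v x) \<le> log 2 B" by (simp add: le_log_iff)
  thus "log_v v x \<in> small_elements B" unfolding small_elements_def using log_v_in_N by simp
qed

abbreviation "\<alpha> \<equiv> alpha F d l n"

lemma alpha_eq: "\<alpha> x v = (if v \<in> support x then log_v v x else zeroN)"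
  unfolding alpha_def support_def by simp

lemma zeroN_small: "zeroN \<in> small_elements B"
  unfolding small_elements_def using zeroN_in_N phi_zero by simp

lemma restrict_alpha_in_PiE:
  "x \<in> points B \<Longrightarrow> restrict (\<alpha> x) (small_places B) \<in> PiE (small_places B) (\<lambda>_. small_elements B)"
  using support_small zeroN_small by (auto simp: alpha_eq)

lemma alpha_outside_small_places:
  assumes "x \<in> points B" "v \<notin> small_places B"
  shows "\<alpha> x v = zeroN"
proof -
  have "v \<notin> support x" using support_small(1)[OF assms(1)] assms(2) by blast
  thus ?thesis by (simp add: alpha_eq)
qed

lemma inj_on_restrict_alpha: "inj_on (\<lambda>f. restrict f (small_places B)) (\<alpha> ` points B)"
proof (rule inj_onI)
  fix f g assume f: "f \<in> \<alpha> ` points B" and g: "g \<in> \<alpha> ` points B"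
    and eq: "restrict f (small_places B) = restrict g (small_places B)"
  show "f = g"
  proof
    fix v show "f v = g v"
    proof (cases "v \<in> small_places B")
      case True
      thus ?thesis using fun_cong[OF eq, of v] by simp
    next
      case False
      obtain x y where xy: "x \<in> points B" "f = \<alpha> x" "y \<in> points B" "g = \<alpha> y" using f g by blast
      thus ?thesis
        using alpha_outside_small_places[OF xy(1) False] alpha_outside_small_places[OF xy(3) False] by simp
    qed
  qed
qed

lemma finite_alpha_image: "finite (\<alpha> ` points B)"
proof (rule inj_on_finite[OF inj_on_restrict_alpha])
  show "(\<lambda>f. restrict f (small_places B)) ` \<alpha> ` points B \<subseteq> PiE (small_places B) (\<lambda>_. small_elements B)"
  proof
    fix g assume "g \<in> (\<lambda>f. restrict f (small_places B)) ` \<alpha> ` points B"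
    then obtain x where "x \<in> points B" "g = restrict (\<alpha> x) (small_places B)" by blast
    thus "g \<in> PiE (small_places B) (\<lambda>_. small_elements B)" using restrict_alpha_in_PiE by simp
  qed
  show "finite (PiE (small_places B) (\<lambda>_. small_elements B))"
    by (intro finite_PiE finite_small_places finite_small_elements)
qed

definition "rankin_exp = max (2 / phi_min) (1 / phi_slope)"
definition "weight v m = (if m = zeroN then 1 else Nv v powr (- rankin_exp * \<phi> m))"

lemma rankin_exp_pos: "rankin_exp > 0"
  unfolding rankin_exp_def using phi_min_pos by (simp add: less_max_iff_disj)

lemma rankin_exp_phi_min: "rankin_exp * phi_min \<ge> 2"
proof -
  have "2 / phi_min * phi_min \<le> rankin_exp * phi_min"
    unfolding rankin_exp_def using phi_min_pos by (intro mult_right_mono) auto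
  thus ?thesis using phi_min_pos by simp
qed

lemma rankin_exp_phi_slope: "rankin_exp * phi_slope \<ge> 1"
proof -
  have "1 / phi_slope * phi_slope \<le> rankin_exp * phi_slope"
    unfolding rankin_exp_def using phi_slope_pos by (intro mult_right_mono) auto
  thus ?thesis using phi_slope_pos by simp
qed

lemma weight_nonneg: "weight v m \<ge> 0"
  unfolding weight_def by simp

text \<open>On a point of height at most \<open>B\<close> the weights multiply to
  \<open>height_fin x powr (- rankin_exp) \<ge> B powr (- rankin_exp)\<close>.\<close>
lemma prod_weight_alpha_ge:
  assumes x: "x \<in> points B"
  shows "(\<Prod>v\<in>small_places B. weight v (\<alpha> x v)) \<ge> B powr (- rankin_exp)"
proof -
  have "support x \<subseteq> small_places B" using support_small(1)[OF x] by blast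
  hence "(\<Prod>v\<in>small_places B. weight v (\<alpha> x v)) = (\<Prod>v\<in>support x. weight v (\<alpha> x v))"
    by (intro prod.mono_neutral_right finite_small_places) (auto simp: alpha_eq weight_def)
  also have "\<dots> = (\<Prod>v\<in>support x. (Nv v powr \<phi> (log_v v x)) powr (- rankin_exp))"
  proof (intro prod.cong refl)
    fix v assume v: "v \<in> support x"
    hence "weight v (\<alpha> x v) = Nv v powr (\<phi> (log_v v x) * - rankin_exp)"
      unfolding alpha_eq weight_def support_def by (simp add: mult.commute)
    thus "weight v (\<alpha> x v) = (Nv v powr \<phi> (log_v v x)) powr (- rankin_exp)" by (simp add: powr_powr)
  qed
  also have "\<dots> = height_fin x powr (- rankin_exp)"
    unfolding height_fin_def by (rule prod_powr_distrib[symmetric])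
  also have "\<dots> \<ge> B powr (- rankin_exp)"
    using height_fin_ge_1[of x] height_fin_le_height[of x] x rankin_exp_pos by (intro powr_mono2') auto
  finally show ?thesis .
qed

text \<open>Rankin's trick: every value of \<open>\<alpha>\<close> on a point of height at most \<open>B\<close> has weight at least
  \<open>B powr (- rankin_exp)\<close>, and the total weight of all candidate values factors over the places.\<close>
lemma card_alpha_image_le:
  assumes B: "B > 0"
  shows "real (card (\<alpha> ` points B)) \<le> B powr rankin_exp * (\<Prod>v\<in>small_places B. \<Sum>m\<in>small_elements B. weight v m)"
proof -
  define V where "V = small_places B"
  define W where "W f = B powr rankin_exp * (\<Prod>v\<in>V. weight v (f v))" for f :: "complex set \<Rightarrow> Nelt"
  define A where "A = (\<lambda>f. restrict f V) ` \<alpha> ` points B"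
  have "card (\<alpha> ` points B) = card A"
    unfolding A_def V_def using card_image[OF inj_on_restrict_alpha] by simp
  have A: "A \<subseteq> PiE V (\<lambda>_. small_elements B)" unfolding A_def V_def using restrict_alpha_in_PiE by blast
  have "1 \<le> W g" if "g \<in> A" for g
  proof -
    obtain x where x: "x \<in> points B" "g = restrict (\<alpha> x) V" using \<open>g \<in> A\<close> unfolding A_def by blast
    have "(\<Prod>v\<in>V. weight v (g v)) = (\<Prod>v\<in>V. weight v (\<alpha> x v))" unfolding x(2) by simp
    hence "B powr rankin_exp * B powr (- rankin_exp) \<le> W g"
      unfolding W_def using prod_weight_alpha_ge[OF x(1)] unfolding V_def by (simp add: mult_left_mono)
    thus ?thesis using B by (simp add: powr_add[symmetric])
  qed
  hence "real (card A) \<le> (\<Sum>g\<in>A. W g)" using sum_mono[of A "\<lambda>_. 1" W] by simp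
  also have "\<dots> \<le> (\<Sum>g\<in>PiE V (\<lambda>_. small_elements B). W g)"
    unfolding W_def using A finite_small_places finite_small_elements
    by (intro sum_mono2 finite_PiE) (auto intro!: mult_nonneg_nonneg prod_nonneg weight_nonneg simp: V_def)
  also have "\<dots> = B powr rankin_exp * (\<Prod>v\<in>V. \<Sum>m\<in>small_elements B. weight v m)"
    unfolding W_def sum_distrib_left[symmetric] V_def
    by (simp add: prod_sum_PiE finite_small_places finite_small_elements)
  finally show ?thesis using \<open>card (\<alpha> ` points B) = card A\<close> unfolding V_def by simp
qed

definition "local_const = 4 * 2 powr (rankin_exp * sector_bound) * real (card (snd ` N)) * 3 ^ d"

lemma two_powr_neg_phi_le:
  assumes "m \<in> N"
  shows "(2::real) powr (- rankin_exp * \<phi> m)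
    \<le> 2 powr (rankin_exp * sector_bound) * (\<Prod>j<d. 2 powr (- \<bar>real_of_int (fst m j)\<bar>))"
proof -
  define S where "S = (\<Sum>j<d. \<bar>real_of_int (fst m j)\<bar>)"
  have "S \<ge> 0" unfolding S_def by (intro sum_nonneg) auto
  have "rankin_exp * (phi_slope * S - sector_bound) \<le> rankin_exp * \<phi> m"
    using phi_ge_linear[OF assms] rankin_exp_pos unfolding S_def by (intro mult_left_mono) auto
  moreover have "S \<le> rankin_exp * phi_slope * S"
    using rankin_exp_phi_slope \<open>S \<ge> 0\<close> by (simp add: mult_le_cancel_right1)
  ultimately have "- rankin_exp * \<phi> m \<le> rankin_exp * sector_bound + (- S)" by (simp add: algebra_simps)
  hence "(2::real) powr (- rankin_exp * \<phi> m) \<le> 2 powr (rankin_exp * sector_bound + (- S))" by simp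
  also have "\<dots> = 2 powr (rankin_exp * sector_bound) * 2 powr (- S)" by (rule powr_add)
  also have "(2::real) powr (- S) = (\<Prod>j<d. 2 powr (- \<bar>real_of_int (fst m j)\<bar>))"
    unfolding S_def sum_negf[symmetric] by (rule powr_sum) simp
  finally show ?thesis .
qed

lemma weight_le:
  assumes v: "v \<in> finite_places F" and m: "m \<in> N" "m \<noteq> zeroN"
  shows "weight v m \<le> 4 / (Nv v)^2 * (2 powr (rankin_exp * sector_bound) * (\<Prod>j<d. 2 powr (- \<bar>real_of_int (fst m j)\<bar>)))"
proof -
  have "2 \<le> rankin_exp * phi_min" by (rule rankin_exp_phi_min)
  also have "\<dots> \<le> rankin_exp * \<phi> m" using phi_ge_phi_min[OF m] rankin_exp_pos by simp
  finally have "Nv v powr (- (rankin_exp * \<phi> m)) \<le> 4 / (Nv v)^2 * 2 powr (- (rankin_exp * \<phi> m))"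
    by (intro powr_neg_le_two_powr norm_ge_2[OF v])
  also have "\<dots> \<le> 4 / (Nv v)^2 * (2 powr (rankin_exp * sector_bound) * (\<Prod>j<d. 2 powr (- \<bar>real_of_int (fst m j)\<bar>)))"
    using two_powr_neg_phi_le[OF m(1)] by (intro mult_left_mono) auto
  finally show ?thesis unfolding weight_def using m(2) by simp
qed

text \<open>\<open>m \<mapsto> (m|\<^bsub>{..<d}\<^esub>, torsion part)\<close> embeds the small elements into a product of finite boxes.\<close>
lemma sum_geometric_small_elements:
  "(\<Sum>m\<in>small_elements B. \<Prod>j<d. (2::real) powr (- \<bar>real_of_int (fst m j)\<bar>)) \<le> real (card (snd ` N)) * 3 ^ d"
proof -
  define M where "M = small_elements B"
  define Z where "Z = (\<lambda>(m, j). fst m j) ` (M \<times> {..<d})"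
  define g where "g y = (\<Prod>j<d. (2::real) powr (- \<bar>real_of_int (y j)\<bar>))" for y :: "nat \<Rightarrow> int"
  define emb where "emb m = (restrict (fst m) {..<d}, snd m)" for m :: Nelt
  have finZ: "finite Z" unfolding Z_def M_def using finite_small_elements by simp
  have "inj_on emb M"
    unfolding emb_def M_def small_elements_def by (rule inj_on_subset[OF inj_on_truncation]) auto
  have sub: "emb ` M \<subseteq> PiE {..<d} (\<lambda>_. Z) \<times> snd ` N"
  proof
    fix e assume "e \<in> emb ` M"
    then obtain m where m: "m \<in> M" "e = emb m" by blast
    have "fst m j \<in> Z" if "j < d" for j unfolding Z_def using m(1) that by (intro image_eqI[of _ _ "(m, j)"]) auto
    moreover have "m \<in> N" using m(1) unfolding M_def small_elements_def by blast
    ultimately show "e \<in> PiE {..<d} (\<lambda>_. Z) \<times> snd ` N" unfolding m(2) emb_def by auto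
  qed
  have "(\<Sum>m\<in>M. g (fst m)) = (\<Sum>p\<in>emb ` M. g (fst p))"
    unfolding sum.reindex[OF \<open>inj_on emb M\<close>] emb_def g_def by simp
  also have "\<dots> \<le> (\<Sum>p\<in>PiE {..<d} (\<lambda>_. Z) \<times> snd ` N. g (fst p))"
    using finZ finite_torsion_parts unfolding g_def
    by (intro sum_mono2[OF _ sub]) (auto intro!: finite_PiE prod_nonneg)
  also have "\<dots> = (\<Sum>y\<in>PiE {..<d} (\<lambda>_. Z). \<Sum>s\<in>snd ` N. g y)"
    unfolding sum.cartesian_product by (simp only: split_def)
  also have "\<dots> = real (card (snd ` N)) * (\<Sum>y\<in>PiE {..<d} (\<lambda>_. Z). g y)"
    by (simp add: sum_distrib_left)
  also have "(\<Sum>y\<in>PiE {..<d} (\<lambda>_. Z). g y) = (\<Prod>j<d. \<Sum>z\<in>Z. (2::real) powr (- \<bar>real_of_int z\<bar>))"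
    unfolding g_def by (rule prod_sum_PiE[symmetric]) (use finZ in auto)
  also have "\<dots> \<le> (\<Prod>j<d. 3)"
    using sum_two_powr_neg_abs_le_3[OF finZ] by (intro prod_mono) (auto intro: sum_nonneg)
  finally show ?thesis unfolding M_def g_def by (simp add: mult_left_mono)
qed

lemma local_sum_le:
  assumes v: "v \<in> finite_places F"
  shows "(\<Sum>m\<in>small_elements B. weight v m) \<le> 1 + local_const / (Nv v)^2"
proof -
  define c where "c = 4 / (Nv v)^2 * 2 powr (rankin_exp * sector_bound)"
  define h where "h m = (\<Prod>j<d. (2::real) powr (- \<bar>real_of_int (fst m j)\<bar>))" for m :: Nelt
  have "(\<Sum>m\<in>small_elements B - {zeroN}. weight v m) \<le> (\<Sum>m\<in>small_elements B - {zeroN}. c * h m)"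
    using weight_le[OF v] unfolding c_def h_def small_elements_def by (intro sum_mono) (simp add: mult.assoc)
  also have "\<dots> \<le> c * (\<Sum>m\<in>small_elements B. h m)"
    unfolding sum_distrib_left[symmetric] c_def h_def using finite_small_elements
    by (intro mult_left_mono sum_mono2) (auto intro: prod_nonneg)
  also have "\<dots> \<le> c * (real (card (snd ` N)) * 3 ^ d)"
    unfolding h_def c_def by (intro mult_left_mono sum_geometric_small_elements) simp
  also have "\<dots> = local_const / (Nv v)^2" unfolding c_def local_const_def by simp
  finally have "(\<Sum>m\<in>small_elements B - {zeroN}. weight v m) \<le> local_const / (Nv v)^2" .
  moreover have "(\<Sum>m\<in>small_elements B. weight v m) = weight v zeroN + (\<Sum>m\<in>small_elements B - {zeroN}. weight v m)"
    using finite_small_elements zeroN_small by (rule sum.remove)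
  moreover have "weight v zeroN = 1" unfolding weight_def by simp
  ultimately show ?thesis by linarith
qed

text \<open>Each prime lies under at most \<open>D\<close> places, and \<open>Nv v \<ge>\<close> the prime below \<open>v\<close>.\<close>
lemma sum_inverse_norm_squares_le:
  assumes V: "finite V" "V \<subseteq> finite_places F"
  shows "(\<Sum>v\<in>V. 1 / (Nv v)^2) \<le> real D"
proof -
  define p where "p = residue_prime"
  have p: "prime (p v)" "of_int (p v) \<in> v" "real_of_int (p v) \<le> Nv v" "p v \<ge> 2" if "v \<in> V" for v
    using residue_prime[of v] prime_ge_2_int that V(2) unfolding p_def by auto
  have "(\<Sum>v\<in>V. 1 / (Nv v)^2) \<le> (\<Sum>v\<in>V. 1 / (real_of_int (p v))^2)"
  proof (rule sum_mono)
    fix v assume v: "v \<in> V"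
    have p2: "real_of_int (p v) \<ge> 2" using p(4)[OF v] by simp
    have "(real_of_int (p v))^2 \<le> (Nv v)^2" using p(3)[OF v] p2 by (intro power_mono) auto
    moreover have "0 < (Nv v)^2 * (real_of_int (p v))^2" using p2 p(3)[OF v] by simp
    ultimately show "1 / (Nv v)^2 \<le> 1 / (real_of_int (p v))^2" by (intro divide_left_mono) simp_all
  qed
  also have "\<dots> = (\<Sum>r\<in>p ` V. \<Sum>v\<in>{v \<in> V. p v = r}. 1 / (real_of_int (p v))^2)"
    by (rule sum.image_gen[OF V(1)])
  also have "\<dots> = (\<Sum>r\<in>p ` V. real (card {v \<in> V. p v = r}) * (1 / (real_of_int r)^2))"
    by (intro sum.cong refl) simp
  also have "\<dots> \<le> (\<Sum>r\<in>p ` V. real D * (1 / (real_of_int r)^2))"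
  proof (intro sum_mono mult_right_mono)
    fix r assume "r \<in> p ` V"
    then obtain v where v: "v \<in> V" "r = p v" by blast
    have "{v \<in> V. p v = r} \<subseteq> {P \<in> finite_places F. of_int r \<in> P}" using p(2) V(2) by auto
    hence "card {v \<in> V. p v = r} \<le> card {P \<in> finite_places F. of_int r \<in> P}"
      using places_above_prime(1)[OF p(1)[OF v(1)]] v(2) by (intro card_mono) auto
    also have "\<dots> \<le> D" using places_above_prime(2)[OF p(1)[OF v(1)]] v(2) by simp
    finally show "real (card {v \<in> V. p v = r}) \<le> real D" by simp
  qed simp
  also have "\<dots> \<le> real D * 1"
    unfolding sum_distrib_left[symmetric] using V(1) p(4)
    by (intro mult_left_mono sum_inverse_squares_le_1) auto
  finally show ?thesis by simp
qed

lemma prod_local_sums_le: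
  "(\<Prod>v\<in>small_places B. \<Sum>m\<in>small_elements B. weight v m) \<le> exp (local_const * real D)"
proof -
  have V: "small_places B \<subseteq> finite_places F" unfolding small_places_def by blast
  have "local_const \<ge> 0" unfolding local_const_def by simp
  have "(\<Prod>v\<in>small_places B. \<Sum>m\<in>small_elements B. weight v m) \<le> (\<Prod>v\<in>small_places B. 1 + local_const / (Nv v)^2)"
    using local_sum_le V by (intro prod_mono) (auto intro!: sum_nonneg weight_nonneg)
  also have "\<dots> \<le> exp (\<Sum>v\<in>small_places B. local_const / (Nv v)^2)"
    using \<open>local_const \<ge> 0\<close> by (intro prod_one_plus_le_exp_sum finite_small_places) simp
  also have "(\<Sum>v\<in>small_places B. local_const / (Nv v)^2) = local_const * (\<Sum>v\<in>small_places B. 1 / (Nv v)^2)"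
    by (simp add: sum_distrib_left)
  also have "\<dots> \<le> local_const * real D"
    using sum_inverse_norm_squares_le[OF finite_small_places V] \<open>local_const \<ge> 0\<close> by (intro mult_left_mono)
  finally show ?thesis by simp
qed

lemma alpha_image_bound:
  assumes "B > 0"
  shows "real (card (\<alpha> ` points B)) \<le> exp (local_const * real D) * B powr rankin_exp"
  using card_alpha_image_le[OF assms] prod_local_sums_le[of B]
  by (simp add: mult.commute mult_left_mono order_trans)

end

theorem mainTheorem5:
  fixes F :: "complex set" and d l :: nat and n :: "nat \<Rightarrow> nat"
    and Rays :: "'r set" and b :: "'r \<Rightarrow> nat \<Rightarrow> int" and Fan :: "'r set set"
    and t :: "'r + Yelt \<Rightarrow> real"
  assumes "number_field F"
    and "simplicial_stacky_fan d l n Rays b Fan"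
    and "t \<in> Lambda_open d l n Rays b Fan"
  shows "\<exists>P :: real poly. \<forall>B > 0.
     finite (alpha F d l n ` {x \<in> torus_points F d l n. height F d l n Rays b Fan t x \<le> B}) \<and>
     real (card (alpha F d l n ` {x \<in> torus_points F d l n. height F d l n Rays b Fan t x \<le> B}))
       \<le> poly P B"
proof -
  interpret height_setting F d l n Rays b Fan t
    using assms by unfold_locales
  define C where "C = exp (local_const * real D)"
  define P where "P = [:C:] + monom C (nat \<lceil>rankin_exp\<rceil>)"
  have "real (card (\<alpha> ` points B)) \<le> poly P B" if "B > 0" for B
  proof -
    have "real (card (\<alpha> ` points B)) \<le> C * B powr rankin_exp"
      using alpha_image_bound[OF that] unfolding C_def .
    also have "\<dots> \<le> C * (1 + B ^ nat \<lceil>rankin_exp\<rceil>)"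
      using powr_le_one_plus_power[OF that less_imp_le[OF rankin_exp_pos]] by (simp add: C_def)
    finally show ?thesis unfolding P_def by (simp add: poly_monom algebra_simps)
  qed
  thus ?thesis using finite_alpha_image by blast
qed

end
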